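(* There is no duality gap between the primal problem $$\min_{R,\Sigma\in\mathbf Q_n}\ \mathrm{tr}(R)\quad\text{s.t.}\quad R\succeq0,\ \Sigma-R\succeq0,\ \chi(\Sigma-R)=0,\ \Sigma\succ0,\ 2\mathcal D_{KL}(\Sigma\|\hat\Sigma)\le\delta$$ and the dual problem $\max_{\mathcal C_0}J$: their optimal values coincide. Moreover, if $(\lambda^*,\Gamma^*,\Theta^* )$ is an optimal solution of the dual problem, then the $\Sigma$-component of every optimal solution of the primal problem equals $$\Sigma^*=\lambda^*\big(\lambda^*\hat\Sigma^{-1}-\Gamma^*+\chi(\Theta^* )\big)^{-1},$$ and every optimal $R^*$ satisfies, with $\Lambda^*:=I+\Gamma^*-\chi(\Theta^* )$, the conditions $\mathrm{tr}(\Lambda^*R^* )=0$, $\mathrm{tr}(\Gamma^*(\Sigma^*-R^* ))=0$, $\mathrm{tr}(\Theta^*\chi(\Sigma^*-R^* ))=0$; in particular $R^*=\tilde UQ\tilde U^\top$ for some $Q\in\mathbf Q_r$, where $\tilde U$ is any matrix whose $r$ columns form an orthonormal basis of $\ker\Lambda^*$, and $\chi(\tilde UQ\tilde U^\top)=\chi(\Sigma^* )$.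
   Context: Notation: $\mathbf Q_n$ real symmetric $n\times n$ matrices; $\chi:\mathbf Q_n\to\mathbf Q_n$ the orthogonal projection (w.r.t. $\langle A,B\rangle=\mathrm{tr}(AB)$) onto the zero-diagonal symmetric matrices (keeps off-diagonal entries, zeroes the diagonal); $|\cdot|$ the determinant. $\hat\Sigma\in\mathbf Q_n$, $\hat\Sigma\succ0$; $\mathcal D_{KL}(\Sigma\|\hat\Sigma):=\frac12(-\log|\Sigma|+\log|\hat\Sigma|+\mathrm{tr}(\Sigma\hat\Sigma^{-1})-n)$; $\delta_{max}:=\log|[\hat\Sigma^{-1}-\chi(\hat\Sigma^{-1})]\hat\Sigma|$, and $0<\delta<\delta_{max}$. Define $$J(\lambda,\Gamma,\Theta):=\lambda\Big(\log\big|\hat\Sigma^{-1}+\lambda^{-1}(\chi(\Theta)-\Gamma)\big|+\log|\hat\Sigma|-\delta\Big),$$ $$\mathcal C_0:=\{(\lambda,\Gamma,\Theta)\in\mathbb R\times\mathbf Q_n\times\mathbf Q_n:\ \lambda>0,\ I+\Gamma-\chi(\Theta)\succeq0,\ \Gamma\succeq0,\ \hat\Sigma^{-1}+\lambda^{-1}(\chi(\Theta)-\Gamma)\succ0\}.$$ *)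

theory Defs
  imports "HOL-Analysis.Analysis"
begin

text \<open>Real n x n matrices are \<open>real^'n^'n\<close>; the dimension n is CARD('n).\<close>

definition symm :: "real^'n^'n \<Rightarrow> bool" where
  "symm A \<longleftrightarrow> transpose A = A"

definition psd :: "real^'n^'n \<Rightarrow> bool" where
  "psd A \<longleftrightarrow> symm A \<and> (\<forall>x. 0 \<le> x \<bullet> (A *v x))"

definition pd :: "real^'n^'n \<Rightarrow> bool" where
  "pd A \<longleftrightarrow> symm A \<and> (\<forall>x. x \<noteq> 0 \<longrightarrow> 0 < x \<bullet> (A *v x))"

text \<open>The projection chi: keep off-diagonal entries, zero the diagonal.\<close>
definition offdiag :: "real^'n^'n \<Rightarrow> real^'n^'n" where
  "offdiag A = (\<chi> i j. if i = j then 0 else A $ i $ j)"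

definition KL :: "real^'n^'n \<Rightarrow> real^'n^'n \<Rightarrow> real" where
  "KL S Sh = (1/2) * (- ln (det S) + ln (det Sh) + trace (S ** matrix_inv Sh) - real CARD('n))"

definition delta_max :: "real^'n^'n \<Rightarrow> real" where
  "delta_max Sh = ln (det ((matrix_inv Sh - offdiag (matrix_inv Sh)) ** Sh))"

definition Jdual :: "real^'n^'n \<Rightarrow> real \<Rightarrow> real \<Rightarrow> real^'n^'n \<Rightarrow> real^'n^'n \<Rightarrow> real" where
  "Jdual Sh \<delta> lam G T =
     lam * (ln (det (matrix_inv Sh + (1/lam) *\<^sub>R (offdiag T - G))) + ln (det Sh) - \<delta>)"

definition C0 :: "real^'n^'n \<Rightarrow> (real \<times> (real^'n^'n) \<times> (real^'n^'n)) set" where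
  "C0 Sh = {(lam, G, T). symm G \<and> symm T \<and> lam > 0 \<and> psd (mat 1 + G - offdiag T) \<and> psd G
              \<and> pd (matrix_inv Sh + (1/lam) *\<^sub>R (offdiag T - G))}"

definition primal_feasible :: "real^'n^'n \<Rightarrow> real \<Rightarrow> ((real^'n^'n) \<times> (real^'n^'n)) set" where
  "primal_feasible Sh \<delta> = {(R, S). symm R \<and> symm S \<and> psd R \<and> psd (S - R)
              \<and> offdiag (S - R) = 0 \<and> pd S \<and> 2 * KL S Sh \<le> \<delta>}"

definition primal_value :: "real^'n^'n \<Rightarrow> real \<Rightarrow> real" where
  "primal_value Sh \<delta> = Inf ((\<lambda>(R, S). trace R) ` primal_feasible Sh \<delta>)"

definition dual_value :: "real^'n^'n \<Rightarrow> real \<Rightarrow> real" where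
  "dual_value Sh \<delta> = Sup ((\<lambda>(lam, G, T). Jdual Sh \<delta> lam G T) ` C0 Sh)"

end

theory Submission
  imports Defs
begin

text \<open>
  Write \<open>Sh\<close> for the estimate \<open>\<Sigma>\<close>-hat. For primal feasible \<open>(R, \<Sigma>)\<close> and dual feasible
  \<open>(\<lambda>, \<Gamma>, \<Theta>)\<close> put \<open>N = Sh\<^sup>-\<^sup>1 + \<lambda>\<^sup>-\<^sup>1(\<chi>(\<Theta>) - \<Gamma>)\<close> and \<open>\<Lambda> = I + \<Gamma> - \<chi>(\<Theta>)\<close>. Since
  \<open>\<chi>(\<Sigma> - R) = 0\<close>, the duality gap is a sum of four nonnegative terms,
  \<open>tr R - J = tr(\<Lambda>R) + tr(\<Gamma>(\<Sigma> - R)) + \<lambda>(tr(N\<Sigma>) - n - ln det(N\<Sigma>)) + \<lambda>(\<delta> - 2 KL(\<Sigma>, Sh))\<close>,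
  the third by \<open>ln det X \<le> tr X - n\<close> for \<open>X\<close> similar to a positive definite matrix. When the gap
  closes every term vanishes: equality in the log-det bound forces \<open>N\<Sigma> = I\<close>, which is the formula
  for \<open>\<Sigma>\<^sup>*\<close>, the first two terms give complementary slackness, and \<open>\<Lambda>R = 0\<close> puts the columns
  of \<open>R\<close> into \<open>ker \<Lambda>\<close>.

  The gap does close. As \<open>ln det\<close> is concave, the set of attainable perturbed values of objective
  and constraints is convex and misses 0, and a separating hyperplane provides Lagrange multipliers.
  The Slater point \<open>(Sh - \<epsilon>I, Sh)\<close> makes the multiplier of the objective positive, and minimising
  the Lagrangian over \<open>\<Sigma>\<close> yields a dual point whose value is at least the primal optimum \<open>p\<close>.
  This uses \<open>p > 0\<close>, which comes from the explicit dual point \<open>\<Gamma> = 0\<close>, \<open>\<Theta> = -\<lambda>\<chi>(Sh\<^sup>-\<^sup>1)\<close> of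
  value \<open>\<lambda>(\<delta>\<^sub>m\<^sub>a\<^sub>x - \<delta>) > 0\<close>.
\<close>

lemma nonneg_affine_at_zero:
  fixes a b :: real
  assumes "\<And>s. 0 < s \<Longrightarrow> 0 \<le> a + s * b"
  shows "0 \<le> a"
proof (rule ccontr)
  assume "\<not> 0 \<le> a"
  define s where "s = - a / (2 * (\<bar>b\<bar> + 1))"
  have s: "0 < s" using \<open>\<not> 0 \<le> a\<close> unfolding s_def by (intro divide_pos_pos) auto
  have "s * b \<le> s * (\<bar>b\<bar> + 1)" using s by (intro mult_left_mono) auto
  also have "\<dots> = - a / 2" unfolding s_def by (simp add: field_simps)
  finally show False using assms[OF s] \<open>\<not> 0 \<le> a\<close> by linarith
qed

lemma nonneg_affine_slope_nonneg:
  fixes a b :: real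
  assumes "\<And>s. 0 < s \<Longrightarrow> 0 \<le> a + s * b"
  shows "0 \<le> b"
proof (rule nonneg_affine_at_zero)
  fix u :: real assume u: "0 < u"
  have "0 \<le> u * (a + (1 / u) * b)" using assms[of "1 / u"] u by simp
  thus "0 \<le> b + u * a" using u by (simp add: algebra_simps)
qed

lemma nonneg_affine_slope_zero:
  fixes a b :: real
  assumes "\<And>s. 0 \<le> a + s * b"
  shows "b = 0"
proof -
  have "0 \<le> b" by (rule nonneg_affine_slope_nonneg) (rule assms)
  moreover have "0 \<le> - b"
    by (rule nonneg_affine_slope_nonneg[of a]) (use assms[of "- _"] in simp)
  ultimately show ?thesis by simp
qed

lemma nonneg_quadratic_linear_coeff_zero:
  fixes c d :: real
  assumes "\<And>t. 0 \<le> t * c + t\<^sup>2 * d"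
  shows "c = 0"
proof -
  have ray: "0 \<le> e * c + s * d" if "e = 1 \<or> e = - 1" "0 < s" for e s
  proof -
    have "0 \<le> (e * s) * c + (e * s)\<^sup>2 * d" by (rule assms)
    also have "\<dots> = s * (e * c + s * d)" using that(1) by (auto simp: power2_eq_square algebra_simps)
    finally show ?thesis using \<open>0 < s\<close> by (simp add: zero_le_mult_iff)
  qed
  have "0 \<le> c" by (rule nonneg_affine_at_zero[of _ d]) (use ray[of 1] in simp)
  moreover have "0 \<le> - c" by (rule nonneg_affine_at_zero[of _ d]) (use ray[of "- 1"] in simp)
  ultimately show ?thesis by simp
qed

lemma transpose_add: "transpose (A + B) = transpose A + transpose (B::real^'n^'m)"
  by (simp add: transpose_def vec_eq_iff)

lemma transpose_diff: "transpose (A - B) = transpose A - transpose (B::real^'n^'m)"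
  by (simp add: transpose_def vec_eq_iff)

lemma transpose_uminus: "transpose (- A) = - transpose (A::real^'n^'m)"
  by (simp add: transpose_def vec_eq_iff)

lemma matrix_add_rdistrib: "((A::real^'n^'m) + B) ** C = A ** C + B ** C"
  by (simp add: matrix_matrix_mult_def vec_eq_iff sum.distrib algebra_simps)

lemma matrix_diff_rdistrib: "((A::real^'n^'m) - B) ** C = A ** C - B ** C"
  by (simp add: matrix_matrix_mult_def vec_eq_iff sum_subtractf algebra_simps)

lemma matrix_diff_ldistrib: "(A::real^'n^'m) ** (B - C) = A ** B - A ** C"
  by (simp add: matrix_matrix_mult_def vec_eq_iff sum_subtractf algebra_simps)

lemma matrix_vector_mult_uminus: "(- (A::real^'n^'m)) *v x = - (A *v x)"
  by (simp add: matrix_vector_mult_def vec_eq_iff sum_negf)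

lemma matrix_uminus_mult: "(- (A::real^'n^'m)) ** B = - (A ** B)"
  by (simp add: matrix_matrix_mult_def vec_eq_iff sum_negf)

lemma trace_uminus: "trace (- (A::real^'n^'n)) = - trace A"
  by (simp add: trace_def sum_negf)

lemma trace_scaleR: "trace (c *\<^sub>R (A::real^'n^'n)) = c * trace A"
  by (simp add: trace_def sum_distrib_left)

lemma trace_nonpos: "(\<And>i. (Y::real^'n^'n) $ i $ i \<le> 0) \<Longrightarrow> trace Y \<le> 0"
  unfolding trace_def by (rule sum_nonpos) auto

lemma inner_matrix_eq_trace: "(Y::real^'n^'m) \<bullet> R = trace (transpose Y ** R)"
  by (simp add: inner_vec_def trace_def matrix_matrix_mult_def transpose_def) (rule sum.swap)

lemma inner_mat1: "mat 1 \<bullet> (X::real^'n^'n) = trace X"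
  by (simp add: inner_matrix_eq_trace)

lemma inner_transpose_transpose: "transpose (A::real^'n^'n) \<bullet> transpose B = A \<bullet> B"
  by (metis inner_matrix_eq_trace inner_commute matrix_transpose_mul trace_mul_sym transpose_transpose)

lemma inner_matrix_vector_transpose: "x \<bullet> ((A::real^'n^'m) *v y) = (transpose A *v x) \<bullet> y"
  by (metis dot_lmul_matrix transpose_matrix_vector)

lemma matrix_vector_mult_axis_nth: "((A::real^'n^'m) *v axis j 1) $ i = A $ i $ j"
  by (simp add: matrix_vector_mult_basis column_def)

lemma matrix_eq_iff_columns:
  fixes A B :: "real^'n^'m"
  shows "A = B \<longleftrightarrow> (\<forall>j. A *v axis j 1 = B *v axis j 1)"
  by (auto simp: vec_eq_iff matrix_vector_mult_axis_nth[symmetric])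

definition diagm :: "('n \<Rightarrow> real) \<Rightarrow> real^'n^'n" where
  "diagm d = (\<chi> i j. if i = j then d i else 0)"

lemma transpose_diagm [simp]: "transpose (diagm d) = diagm d"
  by (simp add: diagm_def transpose_def vec_eq_iff)

lemma diagm_zero [simp]: "diagm (\<lambda>_. 0) = 0"
  by (simp add: diagm_def vec_eq_iff)

lemma matrix_mult_diagm_nth: "((M::real^'n^'m) ** diagm d) $ i $ j = M $ i $ j * d j"
proof -
  have "(\<Sum>k\<in>UNIV. M$i$k * (if k = j then d k else 0)) = (\<Sum>k\<in>UNIV. if k = j then M$i$j * d j else 0)"
    by (intro sum.cong) auto
  thus ?thesis by (simp add: matrix_matrix_mult_def diagm_def)
qed

lemma diagm_mult_matrix_nth: "(diagm d ** (M::real^'m^'n)) $ i $ j = d i * M $ i $ j"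
proof -
  have "(\<Sum>k\<in>UNIV. (if i = k then d i else 0) * M$k$j) = (\<Sum>k\<in>UNIV. if k = i then d i * M$i$j else 0)"
    by (intro sum.cong) auto
  thus ?thesis by (simp add: matrix_matrix_mult_def diagm_def)
qed

lemma diagm_mult: "diagm a ** diagm b = diagm (\<lambda>i. a i * b i)"
  by (simp add: vec_eq_iff matrix_mult_diagm_nth) (simp add: diagm_def)

lemma det_diagm: "det (diagm d) = prod d UNIV"
  by (subst det_diagonal) (auto simp: diagm_def)

lemma trace_mult_diagm: "trace ((C::real^'n^'n) ** diagm d) = (\<Sum>i\<in>UNIV. C $ i $ i * d i)"
  by (simp add: trace_def matrix_mult_diagm_nth)

lemma quadratic_form_diagm: "x \<bullet> (diagm d *v x) = (\<Sum>i\<in>UNIV. d i * (x $ i)\<^sup>2)"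
proof -
  have "(diagm d *v x) $ i = d i * x $ i" for i
    using diagm_mult_matrix_nth[of d "\<chi> i j. x $ i" i] 
    by (simp add: matrix_vector_mult_def matrix_matrix_mult_def)
  thus ?thesis by (simp add: inner_vec_def power2_eq_square mult_ac)
qed

lemma inner_diagm_indicator: "Y \<bullet> diagm (\<lambda>j. if j = i then 1 else 0) = (Y::real^'n^'n) $ i $ i"
proof -
  have "Y \<bullet> diagm (\<lambda>j. if j = i then 1 else 0)
      = (\<Sum>r\<in>UNIV. \<Sum>c\<in>UNIV. Y$r$c * (if r = c \<and> r = i then 1 else 0))"
    unfolding inner_vec_def diagm_def by (intro sum.cong refl) auto
  also have "\<dots> = (\<Sum>r\<in>UNIV. if r = i then Y$i$i else 0)"
  proof (intro sum.cong refl)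
    fix r
    have "(\<Sum>c\<in>UNIV. Y$r$c * (if r = c \<and> r = i then 1 else 0))
        = (\<Sum>c\<in>UNIV. if c = r then (if r = i then Y$i$i else 0) else 0)"
      by (intro sum.cong) auto
    thus "(\<Sum>c\<in>UNIV. Y$r$c * (if r = c \<and> r = i then 1 else 0)) = (if r = i then Y$i$i else 0)"
      by simp
  qed
  finally show ?thesis by simp
qed

lemma det_scaleR: "det (c *\<^sub>R (A::real^'n^'n)) = c ^ CARD('n) * det A"
proof -
  have "c *\<^sub>R A = diagm (\<lambda>_. c) ** A" by (simp add: vec_eq_iff diagm_mult_matrix_nth)
  thus ?thesis by (simp add: det_mul det_diagm)
qed

definition outer :: "real^'n \<Rightarrow> real^'n^'n" where
  "outer x = (\<chi> i j. x $ i * x $ j)"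

lemma inner_outer: "Y \<bullet> outer x = x \<bullet> ((Y::real^'n^'n) *v x)"
  by (simp add: outer_def inner_vec_def matrix_vector_mult_def sum_distrib_left mult_ac)

lemma offdiag_diff: "offdiag (A - B) = offdiag A - offdiag (B::real^'n^'n)"
  by (simp add: offdiag_def vec_eq_iff)

lemma offdiag_scaleR: "offdiag (c *\<^sub>R A) = c *\<^sub>R offdiag (A::real^'n^'n)"
  by (simp add: offdiag_def vec_eq_iff)

lemma offdiag_offdiag [simp]: "offdiag (offdiag A) = offdiag (A::real^'n^'n)"
  by (simp add: offdiag_def vec_eq_iff)

lemma offdiag_zero [simp]: "offdiag (0::real^'n^'n) = 0"
  by (simp add: offdiag_def vec_eq_iff)

lemma transpose_offdiag: "transpose (offdiag A) = offdiag (transpose (A::real^'n^'n))"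
  by (simp add: offdiag_def transpose_def vec_eq_iff eq_commute)

lemma trace_offdiag_mult_eq_0:
  fixes T D :: "real^'n^'n"
  assumes "offdiag D = 0"
  shows "trace (offdiag T ** D) = 0"
proof -
  have "D $ k $ i = 0" if "i \<noteq> k" for i k
    using arg_cong[OF assms, of "\<lambda>M. M $ k $ i"] that by (simp add: offdiag_def)
  hence "offdiag T $ i $ k * D $ k $ i = 0" for i k by (simp add: offdiag_def)
  hence "(\<Sum>i\<in>UNIV. \<Sum>k\<in>UNIV. offdiag T $ i $ k * D $ k $ i) = 0" by (intro sum.neutral ballI)
  thus ?thesis by (simp add: trace_def matrix_matrix_mult_def)
qed

section \<open>The spectral theorem for real symmetric matrices\<close>

lemma symm_inner_matrix_vector:
  fixes A :: "real^'n^'n"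
  assumes "transpose A = A"
  shows "x \<bullet> (A *v y) = (A *v x) \<bullet> y"
  by (metis assms dot_lmul_matrix vector_transpose_matrix)

text \<open>First-order condition for the maximum of the quadratic form on the unit sphere of \<open>V\<close>.\<close>

lemma max_quadratic_form_residual_orthogonal:
  fixes A :: "real^'n^'n"
  assumes A: "transpose A = A" and V: "subspace V" and x: "x \<in> V" "x \<bullet> x = 1"
    and max: "\<And>y. y \<in> V \<Longrightarrow> y \<bullet> (A *v y) \<le> (x \<bullet> (A *v x)) * (y \<bullet> y)"
    and y: "y \<in> V"
  shows "y \<bullet> ((x \<bullet> (A *v x)) *\<^sub>R x - A *v x) = 0"
proof -
  let ?m = "x \<bullet> (A *v x)"
  have "0 \<le> t * (2 * (y \<bullet> (?m *\<^sub>R x - A *v x))) + t\<^sup>2 * (?m * (y \<bullet> y) - y \<bullet> (A *v y))" for t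
  proof -
    have "x + t *\<^sub>R y \<in> V" using x y V by (simp add: subspace_add subspace_scale)
    hence "(x + t *\<^sub>R y) \<bullet> (A *v (x + t *\<^sub>R y)) \<le> ?m * ((x + t *\<^sub>R y) \<bullet> (x + t *\<^sub>R y))"
      by (rule max)
    moreover have "x \<bullet> (A *v y) = y \<bullet> (A *v x)"
      using symm_inner_matrix_vector[OF A] by (simp add: inner_commute)
    ultimately show ?thesis using x(2)
      by (simp add: matrix_vector_right_distrib matrix_vector_mult_scaleR inner_add_left
          inner_add_right inner_diff_right inner_commute algebra_simps power2_eq_square)
  qed
  then show ?thesis using nonneg_quadratic_linear_coeff_zero by fastforce
qed

lemma quadratic_form_max_on_subspace:
  fixes A :: "real^'n^'n"
  assumes V: "subspace V" and z: "z \<in> V" "z \<noteq> 0"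
  obtains x where "x \<in> V" "norm x = 1" "\<And>y. y \<in> V \<Longrightarrow> y \<bullet> (A *v y) \<le> (x \<bullet> (A *v x)) * (y \<bullet> y)"
proof -
  define K where "K = V \<inter> sphere 0 1"
  have "compact K" unfolding K_def using closed_subspace[OF V] by (simp add: closed_Int_compact)
  moreover have "z /\<^sub>R norm z \<in> K" unfolding K_def using z V by (simp add: subspace_scale)
  moreover have "continuous_on K (\<lambda>x. x \<bullet> (A *v x))"
    by (intro continuous_intros linear_continuous_on matrix_vector_mul_linear)
  ultimately obtain x where "x \<in> K" and xmax: "\<And>y. y \<in> K \<Longrightarrow> y \<bullet> (A *v y) \<le> x \<bullet> (A *v x)"
    using continuous_attains_sup[of K] by blast
  moreover have "y \<bullet> (A *v y) \<le> (x \<bullet> (A *v x)) * (y \<bullet> y)" if "y \<in> V" for y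
  proof (cases "y = 0")
    case False
    have "y /\<^sub>R norm y \<in> K" unfolding K_def using that False V by (simp add: subspace_scale)
    hence "(y /\<^sub>R norm y) \<bullet> (A *v (y /\<^sub>R norm y)) \<le> x \<bullet> (A *v x)" by (rule xmax)
    moreover have "(y /\<^sub>R norm y) \<bullet> (A *v (y /\<^sub>R norm y)) = (y \<bullet> (A *v y)) / (norm y)\<^sup>2"
      by (simp add: matrix_vector_mult_scaleR power2_eq_square field_simps)
    ultimately show ?thesis using False by (simp add: divide_le_eq power2_norm_eq_inner mult.commute)
  qed simp
  ultimately show ?thesis using that unfolding K_def by auto
qed

text \<open>The orthogonal complement of finitely many eigenvectors is \<open>A\<close>-invariant, so a maximiser of
  the quadratic form on its unit sphere is again an eigenvector.\<close>

lemma symm_eigenvector_orthogonal: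
  fixes A :: "real^'n^'n"
  assumes A: "transpose A = A" and fin: "finite E"
    and eig: "\<And>e. e \<in> E \<Longrightarrow> A *v e = (e \<bullet> (A *v e)) *\<^sub>R e"
    and card: "card E < CARD('n)"
  obtains x where "norm x = 1" "\<And>e. e \<in> E \<Longrightarrow> e \<bullet> x = 0" "A *v x = (x \<bullet> (A *v x)) *\<^sub>R x"
proof -
  define V where "V = {x::real^'n. \<forall>e\<in>E. e \<bullet> x = 0}"
  have V: "subspace V" unfolding V_def subspace_def by (auto simp: inner_add_right)
  have "dim E < DIM(real^'n)" using dim_le_card'[OF fin] card by simp
  then obtain z where z: "z \<noteq> 0" "\<And>y. y \<in> span E \<Longrightarrow> orthogonal z y"
    using orthogonal_to_subspace_exists by blast
  have "z \<in> V" using z(2)[OF span_base] unfolding V_def orthogonal_def by (simp add: inner_commute)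
  then obtain x where x: "x \<in> V" "norm x = 1"
    and max: "\<And>y. y \<in> V \<Longrightarrow> y \<bullet> (A *v y) \<le> (x \<bullet> (A *v x)) * (y \<bullet> y)"
    using quadratic_form_max_on_subspace[OF V _ z(1)] by blast
  let ?m = "x \<bullet> (A *v x)"
  have "?m *\<^sub>R x - A *v x \<in> V"
    unfolding V_def
  proof (intro CollectI ballI)
    fix e assume e: "e \<in> E"
    have "e \<bullet> (A *v x) = (A *v e) \<bullet> x" by (rule symm_inner_matrix_vector[OF A])
    also have "\<dots> = (e \<bullet> (A *v e)) * (e \<bullet> x)" by (subst eig[OF e]) simp
    finally show "e \<bullet> (?m *\<^sub>R x - A *v x) = 0" using x(1) e unfolding V_def by (simp add: inner_diff_right)
  qed
  from max_quadratic_form_residual_orthogonal[OF A V x(1) _ max this]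
  have "A *v x = ?m *\<^sub>R x" using x(2) by (simp add: norm_eq_1)
  thus ?thesis using that x unfolding V_def by blast
qed

lemma symm_orthonormal_eigenvectors:
  fixes A :: "real^'n^'n"
  assumes A: "transpose A = A" and k: "k \<le> CARD('n)"
  shows "\<exists>E. finite E \<and> card E = k \<and> (\<forall>e\<in>E. norm e = 1 \<and> A *v e = (e \<bullet> (A *v e)) *\<^sub>R e)
          \<and> (\<forall>e\<in>E. \<forall>f\<in>E. e \<noteq> f \<longrightarrow> e \<bullet> f = 0)"
  using k
proof (induction k)
  case (Suc k)
  then obtain E where E: "finite E" "card E = k" "\<forall>e\<in>E. norm e = 1 \<and> A *v e = (e \<bullet> (A *v e)) *\<^sub>R e"
     "\<forall>e\<in>E. \<forall>f\<in>E. e \<noteq> f \<longrightarrow> e \<bullet> f = 0" by auto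
  obtain x where x: "norm x = 1" "\<And>e. e \<in> E \<Longrightarrow> e \<bullet> x = 0" "A *v x = (x \<bullet> (A *v x)) *\<^sub>R x"
    using symm_eigenvector_orthogonal[OF A E(1)] E Suc.prems by auto
  have "x \<notin> E" using x(1,2) by (metis inner_eq_zero_iff norm_zero zero_neq_one)
  then show ?case using E x by (intro exI[of _ "insert x E"]) (auto simp: inner_commute)
qed (intro exI[of _ "{}"], simp)

definition matrix_of_cols :: "('n \<Rightarrow> real^'m) \<Rightarrow> real^'n^'m" where
  "matrix_of_cols v = (\<chi> r c. v c $ r)"

lemma transpose_matrix_of_cols_mult:
  "transpose (matrix_of_cols v) ** matrix_of_cols v = (\<chi> i j. v i \<bullet> v j)"
  by (simp add: matrix_of_cols_def transpose_def matrix_matrix_mult_def inner_vec_def vec_eq_iff)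

lemma matrix_mult_matrix_of_cols: "A ** matrix_of_cols v = matrix_of_cols (\<lambda>c. A *v v c)"
  by (simp add: matrix_of_cols_def matrix_matrix_mult_def matrix_vector_mult_def vec_eq_iff)

lemma matrix_of_cols_mult_diagm: "matrix_of_cols v ** diagm d = matrix_of_cols (\<lambda>c. d c *\<^sub>R v c)"
  by (simp add: matrix_of_cols_def diagm_def matrix_matrix_mult_def vec_eq_iff if_distrib
      mult.commute cong: if_cong)

theorem symm_spectral:
  fixes A :: "real^'n^'n"
  assumes "symm A"
  obtains Q d where "orthogonal_matrix Q" "A = Q ** diagm d ** transpose Q"
proof -
  have A: "transpose A = A" using assms by (simp add: symm_def)
  obtain E where E: "finite E" "card E = CARD('n)"
    "\<forall>e\<in>E. norm e = 1 \<and> A *v e = (e \<bullet> (A *v e)) *\<^sub>R e" "\<forall>e\<in>E. \<forall>f\<in>E. e \<noteq> f \<longrightarrow> e \<bullet> f = 0"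
    using symm_orthonormal_eigenvectors[OF A, of "CARD('n)"] by auto
  obtain v where v: "bij_betw v (UNIV::'n set) E"
    using finite_same_card_bij[of "UNIV::'n set" E] E(1,2) by auto
  define d where "d i = v i \<bullet> (A *v v i)" for i
  define Q where "Q = matrix_of_cols v"
  have vE: "v i \<in> E" for i using v by (auto simp: bij_betw_def)
  have "v i \<bullet> v j = (if i = j then 1 else 0)" for i j
    using E(3,4) vE[of i] vE[of j] bij_betw_inv_into_left[OF v]
    by (auto simp: norm_eq_1) (metis UNIV_I)
  hence Q: "orthogonal_matrix Q"
    unfolding orthogonal_matrix Q_def transpose_matrix_of_cols_mult by (simp add: mat_def vec_eq_iff)
  have "A ** Q = Q ** diagm d"
    unfolding Q_def matrix_mult_matrix_of_cols matrix_of_cols_mult_diagm d_def using E(3) vE by metis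
  hence "A = Q ** diagm d ** transpose Q"
    using Q by (metis matrix_mul_assoc matrix_mul_rid orthogonal_matrix_def)
  with Q that show ?thesis by blast
qed

lemma quadratic_form_spectral:
  fixes Q :: "real^'n^'n"
  shows "x \<bullet> ((Q ** diagm d ** transpose Q) *v x) = (\<Sum>i\<in>UNIV. d i * ((transpose Q *v x) $ i)\<^sup>2)"
proof -
  let ?y = "transpose Q *v x"
  have "x \<bullet> ((Q ** diagm d ** transpose Q) *v x) = x \<bullet> (Q *v (diagm d *v ?y))"
    by (simp add: matrix_vector_mul_assoc matrix_mul_assoc del: transpose_matrix_vector)
  also have "\<dots> = ?y \<bullet> (diagm d *v ?y)"
    by (simp add: inner_matrix_vector_transpose del: transpose_matrix_vector)
  finally show ?thesis by (simp only: quadratic_form_diagm)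
qed

lemma transpose_spectral: "transpose (Q ** diagm d ** transpose (Q::real^'n^'n)) = Q ** diagm d ** transpose Q"
  by (simp only: matrix_transpose_mul transpose_transpose transpose_diagm matrix_mul_assoc)

lemma det_spectral:
  fixes Q :: "real^'n^'n"
  assumes "orthogonal_matrix Q"
  shows "det (Q ** diagm d ** transpose Q) = prod d UNIV"
proof -
  have "det (transpose Q) * det Q = 1"
    using det_mul[of "transpose Q" Q] assms by (simp add: orthogonal_matrix_def)
  thus ?thesis unfolding det_mul det_diagm by simp
qed

lemma trace_spectral:
  fixes Q :: "real^'n^'n"
  assumes "orthogonal_matrix Q"
  shows "trace (Q ** diagm d ** transpose Q) = sum d UNIV"
proof -
  have "trace (Q ** diagm d ** transpose Q) = trace ((transpose Q ** Q) ** diagm d)"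
    by (simp only: trace_mul_sym[of _ "transpose Q"] matrix_mul_assoc)
  thus ?thesis using assms by (simp add: orthogonal_matrix_def trace_def diagm_def)
qed

lemma spectral_mult:
  fixes Q :: "real^'n^'n"
  assumes "orthogonal_matrix Q"
  shows "(Q ** diagm a ** transpose Q) ** (Q ** diagm b ** transpose Q)
    = Q ** diagm (\<lambda>i. a i * b i) ** transpose Q"
proof -
  have "(Q ** diagm a ** transpose Q) ** (Q ** diagm b ** transpose Q)
      = Q ** diagm a ** (transpose Q ** Q) ** diagm b ** transpose Q"
    by (simp only: matrix_mul_assoc)
  also have "\<dots> = Q ** (diagm a ** diagm b) ** transpose Q"
    using assms by (simp only: orthogonal_matrix_def matrix_mul_rid matrix_mul_assoc)
  finally show ?thesis by (simp only: diagm_mult)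
qed

lemma quadratic_form_spectral_axis:
  fixes Q :: "real^'n^'n"
  assumes "orthogonal_matrix Q"
  shows "(Q *v axis i 1) \<bullet> ((Q ** diagm d ** transpose Q) *v (Q *v axis i 1)) = d i"
proof -
  have "transpose Q *v (Q *v axis i 1) = axis i 1"
    using assms by (simp add: orthogonal_matrix_def matrix_vector_mul_assoc del: transpose_matrix_vector)
  hence "(Q *v axis i 1) \<bullet> ((Q ** diagm d ** transpose Q) *v (Q *v axis i 1))
      = (\<Sum>j\<in>UNIV. if j = i then d i else 0)"
    unfolding quadratic_form_spectral by (intro sum.cong) (auto simp: axis_def)
  thus ?thesis by simp
qed

lemma pd_spectral_iff:
  fixes Q :: "real^'n^'n"
  assumes "orthogonal_matrix Q"
  shows "pd (Q ** diagm d ** transpose Q) \<longleftrightarrow> (\<forall>i. 0 < d i)"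
proof
  assume pd: "pd (Q ** diagm d ** transpose Q)"
  show "\<forall>i. 0 < d i"
  proof
    fix i
    have "transpose Q *v (Q *v axis i 1) \<noteq> 0"
      using assms by (simp add: orthogonal_matrix_def matrix_vector_mul_assoc axis_eq_0_iff
          del: transpose_matrix_vector)
    hence "Q *v axis i 1 \<noteq> 0" by auto
    thus "0 < d i" using pd quadratic_form_spectral_axis[OF assms] unfolding pd_def by metis
  qed
next
  assume d: "\<forall>i. 0 < d i"
  show "pd (Q ** diagm d ** transpose Q)"
    unfolding pd_def symm_def
  proof (intro conjI allI impI transpose_spectral)
    fix x :: "real^'n" assume "x \<noteq> 0"
    have "Q *v (transpose Q *v x) = x"
      using assms by (simp add: orthogonal_matrix_def matrix_vector_mul_assoc del: transpose_matrix_vector)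
    with \<open>x \<noteq> 0\<close> obtain i where i: "(transpose Q *v x) $ i \<noteq> 0"
      by (metis matrix_vector_mult_0_right vec_eq_iff zero_index)
    have "0 < d i * ((transpose Q *v x) $ i)\<^sup>2" using d i by simp
    also have "\<dots> \<le> (\<Sum>j\<in>UNIV. d j * ((transpose Q *v x) $ j)\<^sup>2)"
      by (rule member_le_sum) (use d in \<open>auto simp: less_imp_le\<close>)
    finally show "0 < x \<bullet> ((Q ** diagm d ** transpose Q) *v x)" unfolding quadratic_form_spectral .
  qed
qed

lemma psd_spectral_nonneg:
  fixes Q :: "real^'n^'n"
  assumes "orthogonal_matrix Q" "psd (Q ** diagm d ** transpose Q)"
  shows "0 \<le> d i"
  using assms quadratic_form_spectral_axis[OF assms(1)] unfolding psd_def by metis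

lemma psd_obtain_spectral:
  assumes "psd A"
  obtains Q d where "orthogonal_matrix Q" "A = Q ** diagm d ** transpose Q" "\<And>i. 0 \<le> d i"
  by (metis assms psd_def symm_spectral psd_spectral_nonneg)

lemma pd_obtain_spectral:
  assumes "pd A"
  obtains Q d where "orthogonal_matrix Q" "A = Q ** diagm d ** transpose Q" "\<And>i. 0 < d i"
  by (metis assms pd_def symm_spectral pd_spectral_iff)

section \<open>Positive (semi)definite matrices\<close>

lemma pd_diagm: "(\<And>i. 0 < d i) \<Longrightarrow> pd (diagm d :: real^'n^'n)"
  using pd_spectral_iff[OF orthogonal_matrix_id, of d] by simp

lemma psd_diagm: "(\<And>i. 0 \<le> d i) \<Longrightarrow> psd (diagm d :: real^'n^'n)"
  by (simp add: psd_def symm_def quadratic_form_diagm sum_nonneg)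

lemma pd_psd: "pd A \<Longrightarrow> psd A"
  unfolding pd_def psd_def by (metis inner_zero_left order_refl less_imp_le)

lemma symm_zero [simp]: "symm (0::real^'n^'n)"
  by (simp add: symm_def transpose_def vec_eq_iff)

lemma psd_zero [simp]: "psd (0::real^'n^'n)"
  by (simp add: psd_def)

lemma psd_outer: "psd (outer (x::real^'n))"
  unfolding psd_def symm_def
proof (intro conjI allI)
  show "transpose (outer x) = outer x" by (simp add: outer_def transpose_def vec_eq_iff mult.commute)
  fix y :: "real^'n"
  have "y \<bullet> (outer x *v y) = (x \<bullet> y)\<^sup>2"
    by (simp add: outer_def inner_vec_def matrix_vector_mult_def power2_eq_square sum_distrib_left
        sum_distrib_right mult_ac)
  thus "0 \<le> y \<bullet> (outer x *v y)" by simp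
qed

lemma psd_nonneg_combination:
  fixes A B :: "real^'n^'n"
  assumes "psd A" "psd B" "0 \<le> u" "0 \<le> v"
  shows "psd (u *\<^sub>R A + v *\<^sub>R B)"
  using assms
  by (simp add: psd_def symm_def transpose_add transpose_scalar matrix_vector_mult_add_rdistrib
      scaleR_matrix_vector_assoc[symmetric] inner_add_right)

lemma pd_convex_combination:
  fixes A B :: "real^'n^'n"
  assumes A: "pd A" and B: "pd B" and t: "0 \<le> t" "t \<le> 1"
  shows "pd (t *\<^sub>R A + (1 - t) *\<^sub>R B)"
  unfolding pd_def
proof (intro conjI allI impI)
  show "symm (t *\<^sub>R A + (1 - t) *\<^sub>R B)"
    using psd_nonneg_combination[OF pd_psd[OF A] pd_psd[OF B]] t by (simp add: psd_def)
  fix x :: "real^'n" assume "x \<noteq> 0"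
  hence "0 < x \<bullet> (A *v x)" "0 < x \<bullet> (B *v x)" using A B by (auto simp: pd_def)
  hence "0 < t * (x \<bullet> (A *v x)) + (1 - t) * (x \<bullet> (B *v x))"
    using t by (cases "t = 0") (auto intro: add_pos_nonneg)
  thus "0 < x \<bullet> ((t *\<^sub>R A + (1 - t) *\<^sub>R B) *v x)"
    by (simp add: matrix_vector_mult_add_rdistrib scaleR_matrix_vector_assoc[symmetric] inner_add_right)
qed

lemma pd_scaleR: "pd A \<Longrightarrow> 0 < c \<Longrightarrow> pd (c *\<^sub>R (A::real^'n^'n))"
  by (auto simp: pd_def symm_def transpose_scalar scaleR_matrix_vector_assoc[symmetric])

lemma pd_det_pos: "pd A \<Longrightarrow> 0 < det A"
  by (metis pd_obtain_spectral det_spectral prod_pos)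

lemma pd_invertible: "pd A \<Longrightarrow> invertible A"
  using pd_det_pos invertible_det_nz by force

lemma matrix_inv_right: "invertible A \<Longrightarrow> A ** matrix_inv A = mat 1"
  and matrix_inv_left: "invertible A \<Longrightarrow> matrix_inv A ** A = mat 1"
  using someI_ex[of "\<lambda>A'. A ** A' = mat 1 \<and> A' ** A = mat 1"]
  unfolding invertible_def matrix_inv_def by auto

lemma matrix_inv_unique:
  fixes A X :: "real^'n^'n"
  assumes "A ** X = mat 1"
  shows "matrix_inv A = X"
proof -
  have inv: "invertible A" using assms matrix_left_right_inverse unfolding invertible_def by blast
  have "matrix_inv A = matrix_inv A ** (A ** X)" using assms by simp
  also have "\<dots> = X" by (simp add: matrix_mul_assoc matrix_inv_left[OF inv])
  finally show ?thesis .
qed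

lemma pd_matrix_inv:
  fixes A :: "real^'n^'n"
  assumes "pd A"
  shows "pd (matrix_inv A)"
  unfolding pd_def
proof (intro conjI allI impI)
  have inv: "invertible A" by (rule pd_invertible[OF assms])
  have "A ** transpose (matrix_inv A) = mat 1"
    using assms matrix_inv_left[OF inv]
    by (metis matrix_transpose_mul pd_def symm_def transpose_mat)
  thus "symm (matrix_inv A)" unfolding symm_def by (metis matrix_inv_unique)
  fix x :: "real^'n" assume x: "x \<noteq> 0"
  let ?y = "matrix_inv A *v x"
  have yx: "A *v ?y = x" by (simp add: matrix_vector_mul_assoc matrix_inv_right[OF inv])
  hence "?y \<noteq> 0" using x by auto
  hence "0 < ?y \<bullet> (A *v ?y)" using assms unfolding pd_def by blast
  thus "0 < x \<bullet> (matrix_inv A *v x)" by (simp add: yx inner_commute)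
qed

lemma pd_det_matrix_inv:
  fixes A :: "real^'n^'n"
  assumes "pd A"
  shows "det (matrix_inv A) = 1 / det A"
  using det_mul[of "matrix_inv A" A] matrix_inv_left[OF pd_invertible[OF assms]] pd_det_pos[OF assms]
  by (simp add: field_simps)

lemma psd_quadratic_form_zero:
  fixes A :: "real^'n^'n"
  assumes "psd A" "x \<bullet> (A *v x) = 0"
  shows "A *v x = 0"
proof -
  have A: "transpose A = A" using assms unfolding psd_def symm_def by simp
  have "y \<bullet> (A *v x) = 0" for y
  proof -
    have "0 \<le> t * (2 * (y \<bullet> (A *v x))) + t\<^sup>2 * (y \<bullet> (A *v y))" for t
    proof -
        have "0 \<le> (x + t *\<^sub>R y) \<bullet> (A *v (x + t *\<^sub>R y))" using assms unfolding psd_def by blast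
      moreover have "x \<bullet> (A *v y) = y \<bullet> (A *v x)"
        using symm_inner_matrix_vector[OF A] by (simp add: inner_commute)
      ultimately show ?thesis using assms(2)
        by (simp add: matrix_vector_right_distrib matrix_vector_mult_scaleR inner_add_left
            inner_add_right algebra_simps power2_eq_square)
    qed
    from nonneg_quadratic_linear_coeff_zero[OF this] show ?thesis by simp
  qed
  from this[of "A *v x"] show ?thesis by simp
qed

lemma trace_mult_spectral:
  fixes A Q :: "real^'n^'n"
  assumes "orthogonal_matrix Q"
  shows "trace (A ** (Q ** diagm d ** transpose Q))
    = (\<Sum>i\<in>UNIV. ((Q *v axis i 1) \<bullet> (A *v (Q *v axis i 1))) * d i)"
proof -
  have "(transpose Q ** A ** Q) $ i $ i = (Q *v axis i 1) \<bullet> (A *v (Q *v axis i 1))" for i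
  proof -
    have "(transpose Q ** A ** Q) $ i $ i = axis i 1 \<bullet> (transpose Q *v (A *v (Q *v axis i 1)))"
      by (simp add: matrix_vector_mult_axis_nth[symmetric] matrix_vector_mul_assoc matrix_mul_assoc
          inner_axis' del: transpose_matrix_vector)
    thus ?thesis by (simp only: inner_matrix_vector_transpose transpose_transpose)
  qed
  moreover have "trace (A ** (Q ** diagm d ** transpose Q)) = trace ((transpose Q ** A ** Q) ** diagm d)"
    by (simp only: trace_mul_sym[of _ "transpose Q"] matrix_mul_assoc)
  ultimately show ?thesis by (simp add: trace_mult_diagm)
qed

lemma trace_psd_mult_nonneg:
  fixes A B :: "real^'n^'n"
  assumes "psd A" "psd B"
  shows "0 \<le> trace (A ** B)"
proof -
  obtain Q d where Q: "orthogonal_matrix Q" "B = Q ** diagm d ** transpose Q" "\<And>i. 0 \<le> d i"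
    using psd_obtain_spectral[OF assms(2)] by blast
  show ?thesis
    using assms(1) Q by (simp add: trace_mult_spectral psd_def sum_nonneg)
qed

lemma trace_psd_mult_eq_0:
  fixes A B :: "real^'n^'n"
  assumes A: "psd A" and B: "psd B" and tr: "trace (A ** B) = 0"
  shows "A ** B = 0"
proof -
  obtain Q d where Q: "orthogonal_matrix Q" "B = Q ** diagm d ** transpose Q" "\<And>i. 0 \<le> d i"
    using psd_obtain_spectral[OF B] by blast
  define q where "q i = Q *v axis i 1" for i
  have "(\<Sum>i\<in>UNIV. (q i \<bullet> (A *v q i)) * d i) = 0"
    using tr Q unfolding q_def by (simp add: trace_mult_spectral)
  moreover have terms: "0 \<le> (q i \<bullet> (A *v q i)) * d i" for i using A Q(3) by (simp add: psd_def)
  ultimately have "(q i \<bullet> (A *v q i)) * d i = 0" for i by (simp add: sum_nonneg_eq_0_iff)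
  hence "d i = 0 \<or> A *v q i = 0" for i using psd_quadratic_form_zero[OF A] by auto
  moreover have "(A ** Q ** diagm d) $ r $ i = (A *v q i) $ r * d i" for r i
    by (simp only: matrix_mult_diagm_nth q_def matrix_vector_mul_assoc matrix_vector_mult_axis_nth)
  ultimately have "(A ** Q ** diagm d) $ r $ i = 0" for r i by (metis mult_eq_0_iff zero_index)
  hence "A ** Q ** diagm d = 0" by (simp add: vec_eq_iff)
  thus "A ** B = 0" by (simp add: Q(2) matrix_mul_assoc)
qed

lemma psd_trace_nonneg: "psd (A::real^'n^'n) \<Longrightarrow> 0 \<le> trace A"
  using trace_psd_mult_nonneg[of "mat 1" A] by (simp add: psd_def symm_def)

lemma pd_sqrt:
  fixes A :: "real^'n^'n"
  assumes "pd A"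
  obtains H where "transpose H = H" "H ** H = A" "invertible H"
proof -
  obtain Q d where Q: "orthogonal_matrix Q" "A = Q ** diagm d ** transpose Q" "\<And>i. 0 < d i"
    using pd_obtain_spectral[OF assms] by blast
  define H where "H = Q ** diagm (\<lambda>i. sqrt (d i)) ** transpose Q"
  have "transpose H = H" unfolding H_def by (rule transpose_spectral)
  moreover have "H ** H = A" unfolding H_def Q(2) spectral_mult[OF Q(1)]
    using Q(3) by (simp add: less_imp_le)
  moreover have "invertible H"
    unfolding H_def invertible_det_nz det_spectral[OF Q(1)] using Q(3) by (simp add: order_less_imp_not_eq2)
  ultimately show ?thesis using that by blast
qed

lemma pd_subtract_small_identity:
  fixes A :: "real^'n^'n"
  assumes "pd A"
  obtains e where "0 < e" "pd (A - e *\<^sub>R mat 1)"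
proof -
  obtain Q d where Q: "orthogonal_matrix Q" "A = Q ** diagm d ** transpose Q" "\<And>i. 0 < d i"
    using pd_obtain_spectral[OF assms] by blast
  define e where "e = Min (range d) / 2"
  have m: "0 < Min (range d)" "Min (range d) \<le> d i" for i using Q(3) by (simp_all add: Min_gr_iff)
  have e: "0 < e" "e < d i" for i using m(1) m(2)[of i] unfolding e_def by linarith+
  have "diagm (\<lambda>i. d i - e) = diagm d - e *\<^sub>R mat 1" by (simp add: diagm_def mat_def vec_eq_iff)
  hence "Q ** diagm (\<lambda>i. d i - e) ** transpose Q = A - e *\<^sub>R (Q ** transpose Q)"
    by (simp add: Q(2) matrix_diff_ldistrib matrix_diff_rdistrib matrix_scalar_ac
        scalar_matrix_assoc[symmetric])
  moreover have "pd (Q ** diagm (\<lambda>i. d i - e) ** transpose Q)"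
    using e(2) by (simp add: pd_spectral_iff[OF Q(1)])
  ultimately show ?thesis using that e(1) Q(1) by (simp add: orthogonal_matrix_def)
qed

lemma quadratic_form_abs_le:
  fixes A :: "real^'n^'n"
  shows "\<bar>x \<bullet> (A *v x)\<bar> \<le> (\<Sum>i\<in>UNIV. \<Sum>j\<in>UNIV. \<bar>A $ i $ j\<bar>) * (x \<bullet> x)"
proof -
  have "x \<bullet> (A *v x) = (\<Sum>i\<in>UNIV. \<Sum>j\<in>UNIV. A $ i $ j * (x $ i * x $ j))"
    by (simp add: inner_vec_def matrix_vector_mult_def sum_distrib_left mult_ac)
  hence "\<bar>x \<bullet> (A *v x)\<bar> \<le> (\<Sum>i\<in>UNIV. \<bar>\<Sum>j\<in>UNIV. A $ i $ j * (x $ i * x $ j)\<bar>)"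
    by (simp only: sum_abs)
  also have "\<dots> \<le> (\<Sum>i\<in>UNIV. \<Sum>j\<in>UNIV. \<bar>A $ i $ j * (x $ i * x $ j)\<bar>)"
    by (intro sum_mono sum_abs)
  also have "\<dots> \<le> (\<Sum>i\<in>UNIV. \<Sum>j\<in>UNIV. \<bar>A $ i $ j\<bar> * (x \<bullet> x))"
  proof (intro sum_mono)
    fix i j
    have "\<bar>x $ i\<bar> * \<bar>x $ j\<bar> \<le> norm x * norm x" by (intro mult_mono component_le_norm_cart) auto
    hence "\<bar>x $ i * x $ j\<bar> \<le> x \<bullet> x" by (simp add: abs_mult norm_eq_sqrt_inner)
    thus "\<bar>A $ i $ j * (x $ i * x $ j)\<bar> \<le> \<bar>A $ i $ j\<bar> * (x \<bullet> x)"
      by (simp add: abs_mult mult_left_mono)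
  qed
  finally show ?thesis by (simp add: sum_distrib_right)
qed

lemma psd_identity_plus_small:
  fixes A :: "real^'n^'n"
  assumes "symm A" "0 \<le> c" "c * (\<Sum>i\<in>UNIV. \<Sum>j\<in>UNIV. \<bar>A $ i $ j\<bar>) \<le> 1"
  shows "psd (mat 1 + c *\<^sub>R A)"
  unfolding psd_def
proof (intro conjI allI)
  show "symm (mat 1 + c *\<^sub>R A)" using assms(1) by (simp add: symm_def transpose_add transpose_scalar)
  fix x :: "real^'n"
  let ?s = "\<Sum>i\<in>UNIV. \<Sum>j\<in>UNIV. \<bar>A $ i $ j\<bar>"
  have "c * \<bar>x \<bullet> (A *v x)\<bar> \<le> c * (?s * (x \<bullet> x))"
    using quadratic_form_abs_le[of x A] assms(2) by (rule mult_left_mono)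
  also have "\<dots> \<le> x \<bullet> x" using mult_right_mono[OF assms(3), of "x \<bullet> x"] by (simp add: mult.assoc)
  moreover have "c * - \<bar>x \<bullet> (A *v x)\<bar> \<le> c * (x \<bullet> (A *v x))"
    using assms(2) by (intro mult_left_mono) auto
  ultimately have "0 \<le> x \<bullet> x + c * (x \<bullet> (A *v x))" by simp
  thus "0 \<le> x \<bullet> ((mat 1 + c *\<^sub>R A) *v x)"
    by (simp add: matrix_vector_mult_add_rdistrib scaleR_matrix_vector_assoc[symmetric] inner_add_right)
qed

lemma symm_if_orthogonal_antisymmetric:
  fixes Y :: "real^'n^'n"
  assumes "\<And>N. transpose N = - N \<Longrightarrow> Y \<bullet> N = 0"
  shows "symm Y"
proof -
  define N where "N = Y - transpose Y"
  have N: "transpose N = - N" unfolding N_def by (simp add: transpose_diff)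
  have "transpose Y \<bullet> N = - (Y \<bullet> N)"
    by (metis N inner_minus_right inner_transpose_transpose transpose_transpose)
  hence "N \<bullet> N = 0" using assms[OF N] unfolding N_def by (simp add: inner_diff_left)
  thus ?thesis unfolding N_def symm_def by simp
qed

section \<open>The log-determinant\<close>

lemma trace_minus_ln_det_spectral:
  fixes Q :: "real^'n^'n"
  assumes Q: "orthogonal_matrix Q" and k: "\<And>i. 0 < k i"
  shows "trace (Q ** diagm k ** transpose Q) - real CARD('n) - ln (det (Q ** diagm k ** transpose Q))
    = (\<Sum>i\<in>UNIV. k i - 1 - ln (k i))"
proof -
  have "ln (prod k UNIV) = (\<Sum>i\<in>UNIV. ln (k i))"
    by (rule ln_prod) (use k in \<open>auto simp: order_less_imp_not_eq2\<close>)
  thus ?thesis by (simp add: trace_spectral[OF Q] det_spectral[OF Q] sum_subtractf)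
qed

lemma pd_ln_det_le_trace:
  fixes K :: "real^'n^'n"
  assumes "pd K"
  shows "ln (det K) \<le> trace K - real CARD('n)"
proof -
  obtain Q k where Q: "orthogonal_matrix Q" "K = Q ** diagm k ** transpose Q" "\<And>i. 0 < k i"
    using pd_obtain_spectral[OF assms] by blast
  have "trace K - real CARD('n) - ln (det K) = (\<Sum>i\<in>UNIV. k i - 1 - ln (k i))"
    unfolding Q(2) by (rule trace_minus_ln_det_spectral[OF Q(1)]) (rule Q(3))
  moreover have "0 \<le> (\<Sum>i\<in>UNIV. k i - 1 - ln (k i))"
    using ln_le_minus_one[OF Q(3)] by (simp add: sum_nonneg)
  ultimately show ?thesis by simp
qed

lemma pd_ln_det_eq_trace_imp_identity:
  fixes K :: "real^'n^'n"
  assumes "pd K" "ln (det K) = trace K - real CARD('n)"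
  shows "K = mat 1"
proof -
  obtain Q k where Q: "orthogonal_matrix Q" "K = Q ** diagm k ** transpose Q" "\<And>i. 0 < k i"
    using pd_obtain_spectral[OF assms(1)] by blast
  have "trace K - real CARD('n) - ln (det K) = (\<Sum>i\<in>UNIV. k i - 1 - ln (k i))"
    unfolding Q(2) by (rule trace_minus_ln_det_spectral[OF Q(1)]) (rule Q(3))
  hence "(\<Sum>i\<in>UNIV. k i - 1 - ln (k i)) = 0" using assms(2) by simp
  hence "k i - 1 - ln (k i) = 0" for i
    using ln_le_minus_one[OF Q(3)] by (simp add: sum_nonneg_eq_0_iff)
  hence "k i = 1" for i using ln_eq_minus_one[OF Q(3)] by simp
  hence "diagm k = mat 1" by (simp add: diagm_def mat_def vec_eq_iff)
  thus ?thesis using Q(1,2) by (simp add: orthogonal_matrix_def)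
qed

text \<open>With \<open>H\<close> the positive square root of \<open>S\<close>, the product \<open>M S\<close> is similar to the positive
  definite matrix \<open>H M H\<close>.\<close>

lemma pd_mult_similar_pd:
  fixes M S :: "real^'n^'n"
  assumes M: "pd M" and S: "pd S"
  obtains K :: "real^'n^'n" where "pd K" "det K = det (M ** S)" "trace K = trace (M ** S)"
    "K = mat 1 \<Longrightarrow> M ** S = mat 1"
proof -
  obtain H where H: "transpose H = H" "H ** H = S" "invertible H" using pd_sqrt[OF S] by blast
  define K where "K = H ** M ** H"
  have pd_K: "pd K" unfolding pd_def symm_def
  proof (intro conjI allI impI)
    show "transpose K = K" using M unfolding K_def pd_def symm_def
      by (simp add: matrix_transpose_mul H(1) matrix_mul_assoc)
    fix x :: "real^'n" assume "x \<noteq> 0"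
    hence "H *v x \<noteq> 0"
      by (metis H(3) matrix_inv_left matrix_vector_mul_assoc matrix_vector_mul_lid
          matrix_vector_mult_0_right)
    hence "0 < (H *v x) \<bullet> (M *v (H *v x))" using M by (simp add: pd_def)
    also have "\<dots> = x \<bullet> (K *v x)"
      using inner_matrix_vector_transpose[of "M *v (H *v x)" H x] H(1)
      by (simp add: K_def inner_commute matrix_vector_mul_assoc matrix_mul_assoc
          del: transpose_matrix_vector)
    finally show "0 < x \<bullet> (K *v x)" .
  qed
  have det_K: "det K = det (M ** S)" unfolding K_def H(2)[symmetric] by (simp add: det_mul)
  have trace_K: "trace K = trace (M ** S)"
    unfolding K_def H(2)[symmetric] by (metis matrix_mul_assoc trace_mul_sym)
  have identity: "M ** S = mat 1" if "K = mat 1"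
  proof -
    have "H ** (M ** H) = mat 1" using that unfolding K_def by (simp add: matrix_mul_assoc)
    hence "(M ** H) ** H = mat 1" using matrix_left_right_inverse by blast
    thus ?thesis by (simp add: H(2)[symmetric] matrix_mul_assoc)
  qed
  show ?thesis by (rule that[OF pd_K det_K trace_K identity])
qed

lemma ln_det_mult_le_trace:
  fixes M S :: "real^'n^'n"
  assumes "pd M" "pd S"
  shows "ln (det (M ** S)) \<le> trace (M ** S) - real CARD('n)"
  by (metis assms pd_mult_similar_pd pd_ln_det_le_trace)

lemma ln_det_mult_eq_trace_imp_identity:
  fixes M S :: "real^'n^'n"
  assumes "pd M" "pd S" "ln (det (M ** S)) = trace (M ** S) - real CARD('n)"
  shows "M ** S = mat 1"
  by (metis assms pd_mult_similar_pd pd_ln_det_eq_trace_imp_identity)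

text \<open>Concavity via the supporting hyperplane \<open>X \<mapsto> trace (S\<^sup>-\<^sup>1 X) - n + ln det S\<close> at
  the convex combination \<open>S\<close>.\<close>

lemma ln_det_concave:
  fixes S1 S2 :: "real^'n^'n"
  assumes S1: "pd S1" and S2: "pd S2" and t: "0 \<le> t" "t \<le> 1"
  shows "t * ln (det S1) + (1 - t) * ln (det S2) \<le> ln (det (t *\<^sub>R S1 + (1 - t) *\<^sub>R S2))"
proof -
  define S where "S = t *\<^sub>R S1 + (1 - t) *\<^sub>R S2"
  have S: "pd S" unfolding S_def by (rule pd_convex_combination[OF S1 S2 t])
  define M where "M = matrix_inv S"
  have M: "pd M" unfolding M_def by (rule pd_matrix_inv[OF S])
  have ln_det_M: "ln (det M) = - ln (det S)"
    unfolding M_def pd_det_matrix_inv[OF S] using pd_det_pos[OF S] by (simp add: ln_div)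
  have bound: "ln (det X) \<le> trace (M ** X) - real CARD('n) + ln (det S)" if "pd X" for X
    using ln_det_mult_le_trace[OF M that] pd_det_pos[OF M] pd_det_pos[OF that] ln_det_M
    by (simp add: det_mul ln_mult)
  have "trace (M ** S) = t * trace (M ** S1) + (1 - t) * trace (M ** S2)"
    by (simp only: S_def matrix_add_ldistrib matrix_scalar_ac scalar_matrix_assoc[symmetric]
        trace_add trace_scaleR)
  moreover have "trace (M ** S) = real CARD('n)"
    unfolding M_def by (simp add: matrix_inv_left[OF pd_invertible[OF S]] trace_I)
  ultimately have "t * (trace (M ** S1) - real CARD('n) + ln (det S))
      + (1 - t) * (trace (M ** S2) - real CARD('n) + ln (det S)) = ln (det S)"
    by (simp add: algebra_simps)
  moreover have "t * ln (det S1) + (1 - t) * ln (det S2) \<le>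
      t * (trace (M ** S1) - real CARD('n) + ln (det S))
      + (1 - t) * (trace (M ** S2) - real CARD('n) + ln (det S))"
    using bound[OF S1] bound[OF S2] t by (intro add_mono mult_left_mono) auto
  ultimately show ?thesis unfolding S_def by simp
qed

lemma KL_self: "pd Sh \<Longrightarrow> KL Sh Sh = 0"
  by (simp add: KL_def matrix_inv_right pd_invertible trace_I)

lemma KL_convex:
  fixes S1 S2 Sh :: "real^'n^'n"
  assumes "pd S1" "pd S2" "0 \<le> t" "t \<le> 1"
  shows "KL (t *\<^sub>R S1 + (1 - t) *\<^sub>R S2) Sh \<le> t * KL S1 Sh + (1 - t) * KL S2 Sh"
proof -
  let ?S = "t *\<^sub>R S1 + (1 - t) *\<^sub>R S2"
  have tr: "trace (?S ** matrix_inv Sh) =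
      t * trace (S1 ** matrix_inv Sh) + (1 - t) * trace (S2 ** matrix_inv Sh)"
    by (simp only: matrix_add_rdistrib scalar_matrix_assoc[symmetric] trace_add trace_scaleR)
  have "KL ?S Sh - (t * KL S1 Sh + (1 - t) * KL S2 Sh)
      = (t * ln (det S1) + (1 - t) * ln (det S2) - ln (det ?S)) / 2"
    unfolding KL_def tr by (simp add: field_simps)
  thus ?thesis using ln_det_concave[OF assms] by simp
qed

section \<open>Weak duality\<close>

text \<open>\<open>N = Sh\<^sup>-\<^sup>1 + \<lambda>\<^sup>-\<^sup>1(\<chi>(\<Theta>) - \<Gamma>)\<close>; at an optimum \<open>\<Sigma> = N\<^sup>-\<^sup>1\<close>.\<close>

definition dual_precision :: "real^'n^'n \<Rightarrow> real \<Rightarrow> real^'n^'n \<Rightarrow> real^'n^'n \<Rightarrow> real^'n^'n" where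
  "dual_precision Sh lam G T = matrix_inv Sh + (1 / lam) *\<^sub>R (offdiag T - G)"

lemma Jdual_eq: "Jdual Sh \<delta> lam G T = lam * (ln (det (dual_precision Sh lam G T)) + ln (det Sh) - \<delta>)"
  by (simp add: Jdual_def dual_precision_def)

lemma C0_iff: "(lam, G, T) \<in> C0 Sh \<longleftrightarrow> symm G \<and> symm T \<and> 0 < lam \<and> psd (mat 1 + G - offdiag T)
    \<and> psd G \<and> pd (dual_precision Sh lam G T)"
  by (simp add: C0_def dual_precision_def)

lemma primal_feasibleD:
  assumes "(R, S) \<in> primal_feasible Sh \<delta>"
  shows "symm R" "psd R" "psd (S - R)" "offdiag (S - R) = 0" "pd S" "2 * KL S Sh \<le> \<delta>"
  using assms by (auto simp: primal_feasible_def)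

lemma duality_gap_eq:
  fixes Sh G T R S :: "real^'n^'n" and lam \<delta> :: real
  defines "N \<equiv> dual_precision Sh lam G T"
  assumes lam: "0 < lam" and N: "pd N" and S: "pd S" and D: "offdiag (S - R) = 0"
  shows "trace R - Jdual Sh \<delta> lam G T
    = trace ((mat 1 + G - offdiag T) ** R) + trace (G ** (S - R))
      + lam * (trace (N ** S) - real CARD('n) - ln (det (N ** S))) + lam * (\<delta> - 2 * KL S Sh)"
proof -
  define P where "P = matrix_inv Sh"
  have "lam *\<^sub>R N = lam *\<^sub>R P + (offdiag T - G)"
    using lam unfolding N_def P_def dual_precision_def by (simp add: scaleR_add_right)
  hence "lam * trace (N ** S) = trace ((lam *\<^sub>R P + (offdiag T - G)) ** S)"
    by (metis scalar_matrix_assoc trace_scaleR)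
  also have "\<dots> = lam * trace (P ** S) + trace (offdiag T ** S) - trace (G ** S)"
    by (simp add: matrix_add_rdistrib matrix_diff_rdistrib trace_add trace_sub
        scalar_matrix_assoc[symmetric] trace_scaleR)
  also have "trace (offdiag T ** S) = trace (offdiag T ** R)"
    using trace_offdiag_mult_eq_0[OF D, of T] by (simp add: matrix_diff_ldistrib trace_sub)
  finally have "trace R = trace ((mat 1 + G - offdiag T) ** R) + trace (G ** (S - R))
      + lam * trace (N ** S) - lam * trace (P ** S)"
    by (simp add: matrix_add_rdistrib matrix_diff_rdistrib matrix_diff_ldistrib trace_add trace_sub)
  moreover have "ln (det (N ** S)) = ln (det N) + ln (det S)"
    using pd_det_pos[OF N] pd_det_pos[OF S] by (simp add: det_mul ln_mult)
  moreover have "2 * KL S Sh = - ln (det S) + ln (det Sh) + trace (P ** S) - real CARD('n)"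
    unfolding KL_def P_def by (simp add: trace_mul_sym[of S])
  ultimately show ?thesis unfolding Jdual_eq N_def[symmetric] by (simp only:) (simp add: algebra_simps)
qed

lemma duality_gap_terms_nonneg:
  fixes Sh :: "real^'n^'n"
  assumes C: "(lam, G, T) \<in> C0 Sh" and F: "(R, S) \<in> primal_feasible Sh \<delta>"
  shows "0 \<le> trace ((mat 1 + G - offdiag T) ** R)" "0 \<le> trace (G ** (S - R))"
    "0 \<le> trace (dual_precision Sh lam G T ** S) - real CARD('n) - ln (det (dual_precision Sh lam G T ** S))"
    "0 \<le> \<delta> - 2 * KL S Sh"
proof -
  note C' = C[unfolded C0_iff] and F' = primal_feasibleD[OF F]
  show "0 \<le> trace ((mat 1 + G - offdiag T) ** R)" "0 \<le> trace (G ** (S - R))"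
    using C' F' by (auto intro: trace_psd_mult_nonneg)
  have "ln (det (dual_precision Sh lam G T ** S)) \<le> trace (dual_precision Sh lam G T ** S) - real CARD('n)"
    using C' F' by (intro ln_det_mult_le_trace) auto
  thus "0 \<le> trace (dual_precision Sh lam G T ** S) - real CARD('n)
      - ln (det (dual_precision Sh lam G T ** S))" by simp
  show "0 \<le> \<delta> - 2 * KL S Sh" using F' by simp
qed

lemma weak_duality:
  fixes Sh :: "real^'n^'n"
  assumes C: "(lam, G, T) \<in> C0 Sh" and F: "(R, S) \<in> primal_feasible Sh \<delta>"
  shows "Jdual Sh \<delta> lam G T \<le> trace R"
proof -
  have lam: "0 < lam" and N: "pd (dual_precision Sh lam G T)" using C by (simp_all add: C0_iff)
  note terms = duality_gap_terms_nonneg[OF C F] and F' = primal_feasibleD[OF F]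
  have "0 \<le> lam * (trace (dual_precision Sh lam G T ** S) - real CARD('n)
      - ln (det (dual_precision Sh lam G T ** S)))" "0 \<le> lam * (\<delta> - 2 * KL S Sh)"
    using lam terms by simp_all
  with terms duality_gap_eq[OF lam N F'(5,4), where \<delta> = \<delta>] show ?thesis by linarith
qed

lemma closed_duality_gap:
  fixes Sh :: "real^'n^'n"
  assumes C: "(lam, G, T) \<in> C0 Sh" and F: "(R, S) \<in> primal_feasible Sh \<delta>"
    and eq: "Jdual Sh \<delta> lam G T = trace R"
  shows "trace ((mat 1 + G - offdiag T) ** R) = 0" "trace (G ** (S - R)) = 0"
    "S = lam *\<^sub>R matrix_inv (lam *\<^sub>R matrix_inv Sh - G + offdiag T)"
proof -
  define N where "N = dual_precision Sh lam G T"
  note C' = C[unfolded C0_iff N_def[symmetric]] and F' = primal_feasibleD[OF F]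
  note terms = duality_gap_terms_nonneg[OF C F, folded N_def]
  have "0 = trace ((mat 1 + G - offdiag T) ** R) + trace (G ** (S - R))
      + lam * (trace (N ** S) - real CARD('n) - ln (det (N ** S))) + lam * (\<delta> - 2 * KL S Sh)"
    using duality_gap_eq[of lam Sh G T S R \<delta>] C' F' eq unfolding N_def by simp
  moreover have "0 \<le> lam * (trace (N ** S) - real CARD('n) - ln (det (N ** S)))"
    "0 \<le> lam * (\<delta> - 2 * KL S Sh)"
    using C' terms by simp_all
  ultimately have slack: "trace ((mat 1 + G - offdiag T) ** R) = 0" "trace (G ** (S - R)) = 0"
    and "lam * (trace (N ** S) - real CARD('n) - ln (det (N ** S))) = 0"
    using terms by linarith+
  show "trace ((mat 1 + G - offdiag T) ** R) = 0" "trace (G ** (S - R)) = 0" by (fact slack)+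
  have "ln (det (N ** S)) = trace (N ** S) - real CARD('n)"
    using C' \<open>lam * _ = 0\<close> by simp
  hence "N ** S = mat 1" using C' F' by (intro ln_det_mult_eq_trace_imp_identity) auto
  hence "(lam *\<^sub>R N) ** ((1 / lam) *\<^sub>R S) = mat 1"
    using C' by (simp add: matrix_scalar_ac scalar_matrix_assoc[symmetric])
  moreover have "lam *\<^sub>R N = lam *\<^sub>R matrix_inv Sh - G + offdiag T"
    using C' unfolding N_def dual_precision_def by (simp add: scaleR_add_right algebra_simps)
  ultimately show "S = lam *\<^sub>R matrix_inv (lam *\<^sub>R matrix_inv Sh - G + offdiag T)"
    using C' matrix_inv_unique by fastforce
qed

section \<open>Lagrange multipliers\<close>

text \<open>The values of objective (minus \<open>p\<close>) and constraints attainable up to slack; the constraint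
  \<open>psd (\<Sigma> - R) \<and> \<chi>(\<Sigma> - R) = 0\<close> is encoded as \<open>\<Sigma> - R = diagm k\<close> with \<open>k \<ge> 0\<close>. The ambient space
  consists of all matrices, and the antisymmetric slacks \<open>N1, N2\<close> force a separating functional
  to be symmetric.\<close>

definition perturbation_point :: "real^'n^'n \<Rightarrow> real \<Rightarrow> real \<Rightarrow> real^'n^'n \<Rightarrow> real^'n^'n \<Rightarrow> real
    \<Rightarrow> real \<Rightarrow> real^'n^'n \<Rightarrow> ('n \<Rightarrow> real) \<Rightarrow> real^'n^'n \<Rightarrow> real^'n^'n
    \<Rightarrow> real \<times> real \<times> (real^'n^'n) \<times> (real^'n^'n)" where
  "perturbation_point Sh \<delta> p R S a b K k N1 N2
    = (trace R - p + a, 2 * KL S Sh - \<delta> + b, R - K + N1, S - R - diagm k + N2)"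

definition perturbation_set ::
    "real^'n^'n \<Rightarrow> real \<Rightarrow> real \<Rightarrow> (real \<times> real \<times> (real^'n^'n) \<times> (real^'n^'n)) set" where
  "perturbation_set Sh \<delta> p = {perturbation_point Sh \<delta> p R S a b K k N1 N2
     | R S a b K k N1 N2. symm R \<and> pd S \<and> 0 < a \<and> 0 \<le> b \<and> psd K \<and> (\<forall>i. 0 \<le> k i)
        \<and> transpose N1 = - N1 \<and> transpose N2 = - N2}"

text \<open>Only the \<open>KL\<close> component is not affine; its defect is absorbed into the slack \<open>b\<close>.\<close>

lemma perturbation_point_combination:
  assumes "u + v = 1"
  shows "u *\<^sub>R perturbation_point Sh \<delta> p R1 S1 a1 b1 K1 k1 N1 M1
      + v *\<^sub>R perturbation_point Sh \<delta> p R2 S2 a2 b2 K2 k2 N2 M2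
    = perturbation_point Sh \<delta> p (u *\<^sub>R R1 + v *\<^sub>R R2) (u *\<^sub>R S1 + v *\<^sub>R S2) (u * a1 + v * a2)
        (u * (2 * KL S1 Sh + b1) + v * (2 * KL S2 Sh + b2) - 2 * KL (u *\<^sub>R S1 + v *\<^sub>R S2) Sh)
        (u *\<^sub>R K1 + v *\<^sub>R K2) (\<lambda>i. u * k1 i + v * k2 i) (u *\<^sub>R N1 + v *\<^sub>R N2) (u *\<^sub>R M1 + v *\<^sub>R M2)"
proof -
  have v: "v = 1 - u" using assms by simp
  have "u * (trace R1 - p + a1) + v * (trace R2 - p + a2)
      = trace (u *\<^sub>R R1 + v *\<^sub>R R2) - p + (u * a1 + v * a2)"
    unfolding trace_add trace_scaleR v by (simp add: algebra_simps)
  moreover have "diagm (\<lambda>i. u * k1 i + v * k2 i) = u *\<^sub>R diagm k1 + v *\<^sub>R diagm k2"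
    by (simp add: diagm_def vec_eq_iff)
  ultimately show ?thesis unfolding perturbation_point_def v by (simp add: algebra_simps)
qed

lemma perturbation_set_convex: "convex (perturbation_set Sh \<delta> p)"
proof (rule convexI)
  fix x y and u v :: real
  assume x: "x \<in> perturbation_set Sh \<delta> p" and y: "y \<in> perturbation_set Sh \<delta> p"
    and u: "0 \<le> u" and v: "0 \<le> v" and uv: "u + v = 1"
  obtain R1 S1 a1 b1 K1 k1 N1 M1 where X: "x = perturbation_point Sh \<delta> p R1 S1 a1 b1 K1 k1 N1 M1"
    "symm R1" "pd S1" "0 < a1" "0 \<le> b1" "psd K1" "\<forall>i. 0 \<le> k1 i" "transpose N1 = - N1" "transpose M1 = - M1"
    using x unfolding perturbation_set_def by blast
  obtain R2 S2 a2 b2 K2 k2 N2 M2 where Y: "y = perturbation_point Sh \<delta> p R2 S2 a2 b2 K2 k2 N2 M2"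
    "symm R2" "pd S2" "0 < a2" "0 \<le> b2" "psd K2" "\<forall>i. 0 \<le> k2 i" "transpose N2 = - N2" "transpose M2 = - M2"
    using y unfolding perturbation_set_def by blast
  have v1: "v = 1 - u" and u1: "u \<le> 1" using uv v by simp_all
  have "KL (u *\<^sub>R S1 + v *\<^sub>R S2) Sh \<le> u * KL S1 Sh + v * KL S2 Sh"
    unfolding v1 by (rule KL_convex[OF X(3) Y(3) u u1])
  moreover have "0 \<le> u * b1" "0 \<le> v * b2" using u v X(5) Y(5) by simp_all
  ultimately have "0 \<le> u * (2 * KL S1 Sh + b1) + v * (2 * KL S2 Sh + b2) - 2 * KL (u *\<^sub>R S1 + v *\<^sub>R S2) Sh"
    by (simp add: algebra_simps)
  moreover have "pd (u *\<^sub>R S1 + v *\<^sub>R S2)" unfolding v1 by (rule pd_convex_combination[OF X(3) Y(3) u u1])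
  moreover have "symm (u *\<^sub>R R1 + v *\<^sub>R R2)"
    using X(2) Y(2) by (simp add: symm_def transpose_add transpose_scalar)
  moreover have "0 < u * a1 + v * a2"
    using X(4) Y(4) u v uv by (cases "u = 0") (auto intro: add_pos_nonneg)
  moreover have "psd (u *\<^sub>R K1 + v *\<^sub>R K2)" by (rule psd_nonneg_combination[OF X(6) Y(6) u v])
  moreover have "\<forall>i. 0 \<le> u * k1 i + v * k2 i" using X(7) Y(7) u v by simp
  moreover have "transpose (u *\<^sub>R N1 + v *\<^sub>R N2) = - (u *\<^sub>R N1 + v *\<^sub>R N2)"
    "transpose (u *\<^sub>R M1 + v *\<^sub>R M2) = - (u *\<^sub>R M1 + v *\<^sub>R M2)"
    using X(8,9) Y(8,9) by (simp_all add: transpose_add transpose_scalar)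
  ultimately show "u *\<^sub>R x + v *\<^sub>R y \<in> perturbation_set Sh \<delta> p"
    unfolding X(1) Y(1) perturbation_point_combination[OF uv] perturbation_set_def by blast
qed


lemma zero_notin_perturbation_set:
  fixes Sh :: "real^'n^'n"
  assumes lower: "\<And>R S. (R, S) \<in> primal_feasible Sh \<delta> \<Longrightarrow> p \<le> trace R"
  shows "0 \<notin> perturbation_set Sh \<delta> p"
proof
  assume "0 \<in> perturbation_set Sh \<delta> p"
  then obtain R S a b K k N1 N2 where
    eq: "trace R - p + a = 0" "2 * KL S Sh - \<delta> + b = 0" "R - K + N1 = 0" "S - R - diagm k + N2 = 0"
    and X: "symm R" "pd S" "0 < a" "0 \<le> b" "psd K" "\<forall>i. 0 \<le> k i" "transpose N1 = - N1" "transpose N2 = - N2"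
    unfolding perturbation_set_def perturbation_point_def by (auto simp: zero_prod_def)
  have sym: "transpose R = R" "transpose S = S" "transpose K = K"
    using X(1,2,5) by (simp_all add: pd_def psd_def symm_def)
  have "N1 = K - R" "N2 = diagm k - (S - R)" using eq(3,4) by (simp_all add: algebra_simps)
  hence "transpose N1 = N1" "transpose N2 = N2" using sym by (simp_all add: transpose_diff)
  hence "N1 = 0" "N2 = 0" using X(7,8) by (metis eq_neg_iff_add_eq_0 scaleR_2 scaleR_eq_0_iff zero_neq_numeral)+
  hence "R = K" "S - R = diagm k" using eq(3,4) by (simp_all add: algebra_simps)
  moreover have "offdiag (diagm k) = 0" by (simp add: offdiag_def diagm_def vec_eq_iff)
  ultimately have "(R, S) \<in> primal_feasible Sh \<delta>"
    using X eq(2) psd_diagm[of k] unfolding primal_feasible_def by (simp add: pd_def)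
  thus False using lower eq(1) X(3) by fastforce
qed

text \<open>Each property of the separating functional below comes from testing it along a ray inside the
  perturbation set.\<close>

locale separating_functional =
  fixes Sh :: "real^'n^'n" and \<delta> p \<mu> \<nu> :: real and Y1 Y2 :: "real^'n^'n"
  assumes pd_Sh: "pd Sh"
    and separates: "\<And>z. z \<in> perturbation_set Sh \<delta> p \<Longrightarrow> 0 \<le> (\<mu>, \<nu>, Y1, Y2) \<bullet> z"
begin

lemma value_nonneg:
  assumes "symm R" "pd S" "0 < a" "0 \<le> b" "psd K" "\<forall>i. 0 \<le> k i"
    "transpose N1 = - N1" "transpose N2 = - N2"
  shows "0 \<le> \<mu> * (trace R - p + a) + \<nu> * (2 * KL S Sh - \<delta> + b) + Y1 \<bullet> (R - K + N1)
    + Y2 \<bullet> (S - R - diagm k + N2)"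
proof -
  have "(trace R - p + a, 2 * KL S Sh - \<delta> + b, R - K + N1, S - R - diagm k + N2)
      \<in> perturbation_set Sh \<delta> p"
    unfolding perturbation_set_def perturbation_point_def using assms by blast
  from separates[OF this] show ?thesis by (simp add: algebra_simps)
qed

lemma symm_Sh: "symm Sh"
  using pd_Sh by (simp add: pd_def)

lemma antisymmetric_zero: "transpose (0::real^'n^'n) = - 0"
  by (simp add: transpose_def vec_eq_iff)

lemmas value_nonneg_at_Sh = value_nonneg[OF symm_Sh pd_Sh]

abbreviation "value_at_Sh \<equiv> \<mu> * (trace Sh - p + 1) + \<nu> * (2 * KL Sh Sh - \<delta>) + Y1 \<bullet> Sh"

lemma mu_nonneg: "0 \<le> \<mu>"
proof (rule nonneg_affine_slope_nonneg)
  fix s :: real assume "0 < s"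
  from value_nonneg_at_Sh[of s 0 0 "\<lambda>_. 0" 0 0] \<open>0 < s\<close>
  show "0 \<le> \<mu> * (trace Sh - p) + \<nu> * (2 * KL Sh Sh - \<delta>) + Y1 \<bullet> Sh + s * \<mu>"
    by (simp add: antisymmetric_zero algebra_simps)
qed

lemma nu_nonneg: "0 \<le> \<nu>"
proof (rule nonneg_affine_slope_nonneg)
  fix s :: real assume "0 < s"
  from value_nonneg_at_Sh[of 1 s 0 "\<lambda>_. 0" 0 0] \<open>0 < s\<close>
  show "0 \<le> value_at_Sh + s * \<nu>" by (simp add: antisymmetric_zero algebra_simps)
qed

lemma symm_Y1: "symm Y1"
proof (rule symm_if_orthogonal_antisymmetric, rule nonneg_affine_slope_zero)
  fix N :: "real^'n^'n" and s :: real assume N: "transpose N = - N"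
  hence "transpose (s *\<^sub>R N) = - (s *\<^sub>R N)" by (simp add: transpose_scalar)
  from value_nonneg_at_Sh[of 1 0 0 "\<lambda>_. 0" "s *\<^sub>R N" 0 , OF _ _ _ _ this]
  show "0 \<le> value_at_Sh + s * (Y1 \<bullet> N)" by (simp add: antisymmetric_zero algebra_simps)
qed

lemma symm_Y2: "symm Y2"
proof (rule symm_if_orthogonal_antisymmetric, rule nonneg_affine_slope_zero)
  fix N :: "real^'n^'n" and s :: real assume N: "transpose N = - N"
  hence "transpose (s *\<^sub>R N) = - (s *\<^sub>R N)" by (simp add: transpose_scalar)
  from value_nonneg_at_Sh[of 1 0 0 "\<lambda>_. 0" 0 "s *\<^sub>R N", OF _ _ _ _ antisymmetric_zero this]
  show "0 \<le> value_at_Sh + s * (Y2 \<bullet> N)" by (simp add: algebra_simps)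
qed

lemma inner_Y1_psd_nonpos:
  assumes "psd K"
  shows "Y1 \<bullet> K \<le> 0"
proof -
  have "0 \<le> - (Y1 \<bullet> K)"
  proof (rule nonneg_affine_slope_nonneg)
    fix s :: real assume "0 < s"
    hence "psd (s *\<^sub>R K)" using psd_nonneg_combination[OF assms assms, of s 0] by simp
    from value_nonneg_at_Sh[of 1 0 "s *\<^sub>R K" "\<lambda>_. 0" 0 0, OF _ _ this]
    show "0 \<le> value_at_Sh + s * - (Y1 \<bullet> K)"
      by (simp add: antisymmetric_zero algebra_simps diagm_def inner_diff_right)
  qed
  thus ?thesis by simp
qed

lemma Y2_diag_nonpos: "Y2 $ i $ i \<le> 0"
proof -
  let ?E = "diagm (\<lambda>j. if j = i then 1 else 0) :: real^'n^'n"
  have "0 \<le> - (Y2 \<bullet> ?E)"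
  proof (rule nonneg_affine_slope_nonneg)
    fix s :: real assume "0 < s"
    hence "\<forall>j. 0 \<le> s * (if j = i then 1 else 0)" by simp
    from value_nonneg_at_Sh[of 1 0 0 "\<lambda>j. s * (if j = i then 1 else 0)" 0 0, OF _ _ _ this]
    have "0 \<le> value_at_Sh + Y2 \<bullet> (- diagm (\<lambda>j. s * (if j = i then 1 else 0)))"
      by (simp add: antisymmetric_zero algebra_simps)
    moreover have "diagm (\<lambda>j. s * (if j = i then 1 else 0)) = s *\<^sub>R ?E"
      by (simp add: diagm_def vec_eq_iff)
    ultimately show "0 \<le> value_at_Sh + s * - (Y2 \<bullet> ?E)" by simp
  qed
  thus ?thesis by (simp add: inner_diagm_indicator)
qed

lemma lagrangian_nonneg:
  assumes "symm R" "pd S"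
  shows "0 \<le> \<mu> * (trace R - p) + \<nu> * (2 * KL S Sh - \<delta>) + Y1 \<bullet> R + Y2 \<bullet> (S - R)"
proof (rule nonneg_affine_at_zero)
  fix s :: real assume "0 < s"
  from value_nonneg[OF assms this, of 0 0 "\<lambda>_. 0" 0 0] \<open>0 < s\<close>
  show "0 \<le> \<mu> * (trace R - p) + \<nu> * (2 * KL S Sh - \<delta>) + Y1 \<bullet> R + Y2 \<bullet> (S - R) + s * \<mu>"
    by (simp add: antisymmetric_zero algebra_simps)
qed

lemma Y2_eq: "Y2 = \<mu> *\<^sub>R mat 1 + Y1"
proof -
  define C where "C = \<mu> *\<^sub>R mat 1 + Y1 - Y2"
  have "symm C"
    using symm_Y1 symm_Y2 unfolding C_def symm_def by (simp add: transpose_add transpose_diff transpose_scalar)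
  have CC: "C \<bullet> C = \<mu> * trace C + Y1 \<bullet> C - Y2 \<bullet> C"
    unfolding C_def by (simp add: inner_add_left inner_diff_left inner_mat1)
  have "C \<bullet> C = 0"
  proof (rule nonneg_affine_slope_zero)
    fix s :: real
    have "symm (s *\<^sub>R C)" using \<open>symm C\<close> by (simp add: symm_def transpose_scalar)
    from lagrangian_nonneg[OF this pd_Sh]
    show "0 \<le> - \<mu> * p + \<nu> * (2 * KL Sh Sh - \<delta>) + Y2 \<bullet> Sh + s * (C \<bullet> C)"
      unfolding CC by (simp add: trace_scaleR inner_diff_right algebra_simps)
  qed
  hence "C = 0" by simp
  thus ?thesis unfolding C_def by (simp add: algebra_simps)
qed

lemma psd_uminus_Y1: "psd (- Y1)"
  using symm_Y1 inner_Y1_psd_nonpos[OF psd_outer]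
  by (simp add: psd_def symm_def transpose_uminus inner_outer matrix_vector_mult_uminus)

text \<open>Slater's condition: at the strictly feasible point \<open>(Sh - \<epsilon>I, Sh)\<close> the functional would
  vanish identically if \<open>\<mu> = 0\<close>.\<close>

lemma mu_pos:
  assumes "0 < \<delta>" and nonzero: "(\<mu>, \<nu>, Y1, Y2) \<noteq> 0"
  shows "0 < \<mu>"
proof (rule ccontr)
  assume "\<not> 0 < \<mu>"
  hence "\<mu> = 0" using mu_nonneg by simp
  hence Y2: "Y2 = Y1" using Y2_eq by simp
  obtain e where e: "0 < e" "pd (Sh - e *\<^sub>R mat 1)" using pd_subtract_small_identity[OF pd_Sh] by blast
  define R where "R = Sh - e *\<^sub>R mat 1"
  have R: "pd R" "symm R" using e(2) unfolding R_def pd_def by auto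
  have "Sh - R = e *\<^sub>R mat 1" unfolding R_def by simp
  hence "0 \<le> \<nu> * (- \<delta>) + Y1 \<bullet> R + e * trace Y1"
    using lagrangian_nonneg[OF R(2) pd_Sh] \<open>\<mu> = 0\<close> Y2 KL_self[OF pd_Sh]
    by (simp add: inner_commute[of Y1 "mat 1"] inner_mat1)
  moreover have "Y1 \<bullet> R = - trace (- Y1 ** R)"
    using symm_Y1 by (simp add: inner_matrix_eq_trace symm_def matrix_uminus_mult trace_uminus)
  ultimately have "0 \<le> - (\<nu> * \<delta>) - trace (- Y1 ** R) + e * trace Y1" by simp
  moreover have "0 \<le> trace (- Y1 ** R)" by (rule trace_psd_mult_nonneg[OF psd_uminus_Y1 pd_psd[OF R(1)]])
  moreover have "e * trace Y1 \<le> 0"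
    using e(1) trace_nonpos[of Y1] Y2_diag_nonpos Y2 by (simp add: mult_nonneg_nonpos)
  moreover have "0 \<le> \<nu> * \<delta>" using nu_nonneg assms(1) by simp
  ultimately have "trace (- Y1 ** R) = 0" "\<nu> * \<delta> = 0" by linarith+
  hence "- Y1 ** R = 0" by (intro trace_psd_mult_eq_0[OF psd_uminus_Y1 pd_psd[OF R(1)]])
  hence "- Y1 ** R ** matrix_inv R = 0" by simp
  hence "Y1 = 0" by (simp add: matrix_mul_assoc[symmetric] matrix_inv_right[OF pd_invertible[OF R(1)]])
  moreover have "\<nu> = 0" using \<open>\<nu> * \<delta> = 0\<close> assms(1) by simp
  ultimately show False using nonzero \<open>\<mu> = 0\<close> Y2 by (simp add: zero_prod_def)
qed

end

lemma lagrange_multipliers: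
  fixes Sh :: "real^'n^'n"
  assumes Sh: "pd Sh" and \<delta>: "0 < \<delta>"
    and lower: "\<And>R S. (R, S) \<in> primal_feasible Sh \<delta> \<Longrightarrow> p \<le> trace R"
  obtains lam Z where "0 \<le> lam" "symm Z" "\<And>i. Z $ i $ i \<le> 0" "psd (mat 1 - Z)"
    "\<And>S. pd S \<Longrightarrow> p \<le> lam * (2 * KL S Sh - \<delta>) + trace (Z ** S)"
proof -
  have "\<exists>w. w \<noteq> 0 \<and> (\<forall>z\<in>perturbation_set Sh \<delta> p. 0 \<le> w \<bullet> z)"
    by (rule separating_hyperplane_set_0[OF perturbation_set_convex zero_notin_perturbation_set[OF lower]])
  then obtain w where w: "w \<noteq> 0" "\<And>z. z \<in> perturbation_set Sh \<delta> p \<Longrightarrow> 0 \<le> w \<bullet> z"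
    by blast
  obtain \<mu> \<nu> Y1 Y2 where w_eq: "w = (\<mu>, \<nu>, Y1, Y2)" by (metis prod.collapse)
  interpret separating_functional Sh \<delta> p \<mu> \<nu> Y1 Y2
    using Sh w(2) unfolding w_eq by unfold_locales
  have \<mu>: "0 < \<mu>" using mu_pos[OF \<delta>] w(1) unfolding w_eq .
  define Z where "Z = (1 / \<mu>) *\<^sub>R Y2"
  have Z: "symm Z" using symm_Y2 unfolding Z_def symm_def by (simp add: transpose_scalar)
  have diag: "Z $ i $ i \<le> 0" for i
    using Y2_diag_nonpos[of i] \<mu> unfolding Z_def by (simp add: divide_nonpos_pos)
  have "mat 1 - Z = (1 / \<mu>) *\<^sub>R (- Y1)" unfolding Z_def Y2_eq using \<mu> by (simp add: scaleR_add_right)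
  hence psd: "psd (mat 1 - Z)" using psd_nonneg_combination[OF psd_uminus_Y1 psd_uminus_Y1, of "1 / \<mu>" 0] \<mu>
    by simp
  have bound: "p \<le> \<nu> / \<mu> * (2 * KL S Sh - \<delta>) + trace (Z ** S)" if S: "pd S" for S
  proof -
    have "0 \<le> - \<mu> * p + \<nu> * (2 * KL S Sh - \<delta>) + Y2 \<bullet> S"
      using lagrangian_nonneg[OF symm_zero S] by (simp add: trace_def)
    hence "0 \<le> (1 / \<mu>) * (- \<mu> * p + \<nu> * (2 * KL S Sh - \<delta>) + Y2 \<bullet> S)" using \<mu> by simp
    also have "\<dots> = - p + \<nu> / \<mu> * (2 * KL S Sh - \<delta>) + Z \<bullet> S"
      unfolding Z_def using \<mu> by (simp add: field_simps)
    also have "Z \<bullet> S = trace (Z ** S)"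
      using Z by (simp add: inner_matrix_eq_trace symm_def)
    finally show ?thesis by simp
  qed
  have "0 \<le> \<nu> / \<mu>" using nu_nonneg \<mu> by simp
  from that[OF this Z diag psd bound] show ?thesis .
qed

text \<open>Along the eigenvector of a nonpositive eigenvalue of \<open>M\<close>, \<open>\<Sigma>\<close> can be scaled to any
  determinant without increasing \<open>trace (M \<Sigma>)\<close>.\<close>

lemma not_pd_trace_mult_bounded:
  fixes M :: "real^'n^'n"
  assumes "symm M" "\<not> pd M"
  obtains K0 where "\<And>s. 0 < s \<Longrightarrow> \<exists>S. pd S \<and> det S = s \<and> trace (M ** S) \<le> K0"
proof -
  obtain Q m where Q: "orthogonal_matrix Q" "M = Q ** diagm m ** transpose Q"
    using symm_spectral[OF assms(1)] by blast
  obtain k where k: "m k \<le> 0" using assms(2) Q by (metis not_le pd_spectral_iff)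
  have "\<exists>S. pd S \<and> det S = s \<and> trace (M ** S) \<le> (\<Sum>i\<in>UNIV. \<bar>m i\<bar>)" if s: "0 < s" for s
  proof -
    define \<sigma> where "\<sigma> i = (if i = k then s else 1)" for i
    define S where "S = Q ** diagm \<sigma> ** transpose Q"
    have "pd S" unfolding S_def pd_spectral_iff[OF Q(1)] using s by (simp add: \<sigma>_def)
    moreover have "det S = s"
    proof -
      have "prod \<sigma> UNIV = \<sigma> k * prod \<sigma> (UNIV - {k})" by (simp add: prod.remove)
      also have "prod \<sigma> (UNIV - {k}) = 1" by (intro prod.neutral) (simp add: \<sigma>_def)
      finally show ?thesis unfolding S_def det_spectral[OF Q(1)] by (simp add: \<sigma>_def)
    qed
    moreover have "m i * \<sigma> i \<le> \<bar>m i\<bar>" for i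
      using k s by (cases "i = k") (auto simp: \<sigma>_def mult_nonpos_nonneg intro: order_trans[of _ 0])
    hence "trace (M ** S) \<le> (\<Sum>i\<in>UNIV. \<bar>m i\<bar>)"
      unfolding S_def Q(2) spectral_mult[OF Q(1)] trace_spectral[OF Q(1)] by (intro sum_mono)
    ultimately show ?thesis by blast
  qed
  thus ?thesis using that by blast
qed

lemma lagrangian_eq:
  fixes Sh Z S :: "real^'n^'n"
  shows "lam * (2 * KL S Sh - \<delta>) + trace (Z ** S)
    = lam * (- ln (det S) + ln (det Sh) - real CARD('n) - \<delta>) + trace ((lam *\<^sub>R matrix_inv Sh + Z) ** S)"
  unfolding KL_def by (simp add: matrix_add_rdistrib scalar_matrix_assoc[symmetric] trace_add
      trace_scaleR trace_mul_sym[of "matrix_inv Sh" S] algebra_simps)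

lemma lagrangian_bounded_below_imp_pd:
  fixes Sh Z :: "real^'n^'n"
  assumes Sh: "pd Sh" and lam: "0 < lam" and Z: "symm Z"
    and bound: "\<And>S. pd S \<Longrightarrow> p \<le> lam * (2 * KL S Sh - \<delta>) + trace (Z ** S)"
  shows "pd (lam *\<^sub>R matrix_inv Sh + Z)" (is "pd ?M")
proof (rule ccontr)
  assume "\<not> pd ?M"
  moreover have "symm ?M" using Z pd_matrix_inv[OF Sh]
    by (simp add: pd_def symm_def transpose_add transpose_scalar)
  ultimately obtain K0 where K0: "\<And>s. 0 < s \<Longrightarrow> \<exists>S. pd S \<and> det S = s \<and> trace (?M ** S) \<le> K0"
    using not_pd_trace_mult_bounded by blast
  define c where "c = lam * (ln (det Sh) - real CARD('n) - \<delta>) + K0 - p + 1"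
  obtain S where S: "pd S" "det S = exp (c / lam)" "trace (?M ** S) \<le> K0"
    using K0[of "exp (c / lam)"] by auto
  have "lam * ln (det S) = c" using S(2) lam by simp
  hence "lam * (2 * KL S Sh - \<delta>) + trace (Z ** S) \<le> p - 1"
    using S(3) unfolding lagrangian_eq c_def by (simp add: algebra_simps)
  thus False using bound[OF S(1)] by simp
qed

text \<open>For a multiplier with \<open>M = \<lambda>Sh\<^sup>-\<^sup>1 + Z\<close> positive definite, the Lagrangian
  \<open>\<Sigma> \<mapsto> \<lambda>(2 KL(\<Sigma>, Sh) - \<delta>) + trace (Z \<Sigma>)\<close> is minimised at \<open>\<Sigma> = \<lambda>M\<^sup>-\<^sup>1\<close>, where it equals
  the dual objective at \<open>\<Gamma> = -diag(Z)\<close>, \<open>\<Theta> = \<chi>(Z)\<close>.\<close>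

lemma multiplier_dual_point:
  fixes Sh Z :: "real^'n^'n" and lam \<delta> :: real
  defines "M \<equiv> lam *\<^sub>R matrix_inv Sh + Z"
  defines "G \<equiv> diagm (\<lambda>i. - Z $ i $ i)" and "T \<equiv> offdiag Z" and "S \<equiv> lam *\<^sub>R matrix_inv M"
  assumes Sh: "pd Sh" and lam: "0 < lam" and Z: "symm Z" "\<And>i. Z $ i $ i \<le> 0" "psd (mat 1 - Z)"
    and M: "pd M"
  shows "(lam, G, T) \<in> C0 Sh" "pd S"
    "Jdual Sh \<delta> lam G T = lam * (2 * KL S Sh - \<delta>) + trace (Z ** S)"
proof -
  have Z_eq: "offdiag T - G = Z" unfolding G_def T_def by (auto simp: offdiag_def diagm_def vec_eq_iff)
  have N: "dual_precision Sh lam G T = (1 / lam) *\<^sub>R M"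
    unfolding dual_precision_def Z_eq M_def using lam by (simp add: scaleR_add_right)
  show "(lam, G, T) \<in> C0 Sh"
    unfolding C0_iff N
  proof (intro conjI)
    show "symm G" unfolding G_def symm_def by simp
    show "symm T" using Z(1) unfolding T_def symm_def by (simp add: transpose_offdiag)
    show "psd (mat 1 + G - offdiag T)" using Z(3) Z_eq by (simp add: algebra_simps)
    show "psd G" unfolding G_def by (rule psd_diagm) (simp add: Z(2))
    show "pd ((1 / lam) *\<^sub>R M)" by (rule pd_scaleR[OF M]) (simp add: lam)
  qed (rule lam)
  show S: "pd S" unfolding S_def by (rule pd_scaleR[OF pd_matrix_inv[OF M] lam])
  have dM: "0 < det M" by (rule pd_det_pos[OF M])
  have "trace (M ** S) = lam * real CARD('n)"
    unfolding S_def by (simp add: matrix_scalar_ac scalar_matrix_assoc[symmetric] trace_scaleR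
        matrix_inv_right[OF pd_invertible[OF M]] trace_I)
  moreover have "ln (det S) = real CARD('n) * ln lam - ln (det M)"
    unfolding S_def det_scaleR pd_det_matrix_inv[OF M] using lam dM by (simp add: ln_mult ln_div ln_realpow)
  moreover have "ln (det ((1 / lam) *\<^sub>R M)) = - real CARD('n) * ln lam + ln (det M)"
    unfolding det_scaleR using lam dM by (simp add: ln_mult ln_div ln_realpow)
  ultimately have "trace (M ** S) = lam * real CARD('n)" "ln (det ((1 / lam) *\<^sub>R M)) = - ln (det S)"
    by linarith+
  then show "Jdual Sh \<delta> lam G T = lam * (2 * KL S Sh - \<delta>) + trace (Z ** S)"
    unfolding Jdual_eq N lagrangian_eq M_def[symmetric] by (simp add: algebra_simps)
qed

lemma dual_attains_primal_lower_bound: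
  fixes Sh :: "real^'n^'n"
  assumes Sh: "pd Sh" and \<delta>: "0 < \<delta>" and p: "0 < p"
    and lower: "\<And>R S. (R, S) \<in> primal_feasible Sh \<delta> \<Longrightarrow> p \<le> trace R"
  obtains lam G T where "(lam, G, T) \<in> C0 Sh" "p \<le> Jdual Sh \<delta> lam G T"
proof -
  obtain lam Z where lZ: "0 \<le> lam" "symm Z" "\<And>i. Z $ i $ i \<le> 0" "psd (mat 1 - Z)"
    and bound: "\<And>S. pd S \<Longrightarrow> p \<le> lam * (2 * KL S Sh - \<delta>) + trace (Z ** S)"
  proof (rule lagrange_multipliers[OF Sh \<delta>])
    show "\<And>R S. (R, S) \<in> primal_feasible Sh \<delta> \<Longrightarrow> p \<le> trace R" by (rule lower)
  qed blast
  have lam: "0 < lam"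
  proof (rule ccontr)
    assume "\<not> 0 < lam"
    hence "p \<le> trace Z" using lZ(1) bound[of "mat 1"] by (simp add: pd_def symm_def)
    thus False using trace_nonpos[OF lZ(3)] p by simp
  qed
  have "pd (lam *\<^sub>R matrix_inv Sh + Z)" by (rule lagrangian_bounded_below_imp_pd[OF Sh lam lZ(2) bound])
  with multiplier_dual_point[OF Sh lam lZ(2-4)] bound show ?thesis
    using that by fastforce
qed

section \<open>Strong duality and the optimal solutions\<close>

text \<open>The dual point \<open>\<Gamma> = 0\<close>, \<open>\<Theta> = -\<lambda> \<chi>(Sh\<^sup>-\<^sup>1)\<close> with \<open>\<lambda>\<close> small enough for \<open>I + \<lambda> \<chi>(Sh\<^sup>-\<^sup>1) \<succeq> 0\<close>
  has \<open>Sh\<^sup>-\<^sup>1 + \<lambda>\<^sup>-\<^sup>1\<chi>(\<Theta>)\<close> equal to the diagonal part of \<open>Sh\<^sup>-\<^sup>1\<close>, hence dual value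
  \<open>\<lambda>(\<delta>\<^sub>m\<^sub>a\<^sub>x - \<delta>)\<close>.\<close>

lemma dual_point_positive_value:
  fixes Sh :: "real^'n^'n"
  assumes Sh: "pd Sh" and \<delta>: "\<delta> < delta_max Sh"
  obtains lam G T where "(lam, G, T) \<in> C0 Sh" "0 < Jdual Sh \<delta> lam G T"
proof -
  define P where "P = matrix_inv Sh"
  have P: "pd P" unfolding P_def by (rule pd_matrix_inv[OF Sh])
  define lam where "lam = 1 / (1 + (\<Sum>i\<in>UNIV. \<Sum>j\<in>UNIV. \<bar>offdiag P $ i $ j\<bar>))"
  have "0 \<le> (\<Sum>i\<in>UNIV. \<Sum>j\<in>UNIV. \<bar>offdiag P $ i $ j\<bar>)" by (intro sum_nonneg) auto
  hence lam: "0 < lam" "lam * (\<Sum>i\<in>UNIV. \<Sum>j\<in>UNIV. \<bar>offdiag P $ i $ j\<bar>) \<le> 1"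
    unfolding lam_def by (auto simp: field_simps)
  define T where "T = (- lam) *\<^sub>R offdiag P"
  define D where "D = diagm (\<lambda>i. P $ i $ i)"
  have PD: "P - offdiag P = D" unfolding D_def by (auto simp: offdiag_def diagm_def vec_eq_iff)
  have "0 < P $ i $ i" for i
  proof -
    have "axis i 1 \<noteq> (0::real^'n)" by (simp add: axis_eq_0_iff)
    hence "0 < axis i 1 \<bullet> (P *v axis i 1)" using P by (simp add: pd_def)
    thus ?thesis by (simp add: inner_axis' matrix_vector_mult_axis_nth)
  qed
  hence pd_D: "pd D" unfolding D_def by (rule pd_diagm)
  have oT: "offdiag T = (- lam) *\<^sub>R offdiag P" unfolding T_def by (simp only: offdiag_scaleR offdiag_offdiag)
  have N: "dual_precision Sh lam 0 T = D"
    unfolding dual_precision_def oT P_def[symmetric] PD[symmetric] using lam(1) by simp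
  have "symm P" using P by (simp add: pd_def)
  hence "symm (offdiag P)" by (simp add: symm_def transpose_offdiag)
  hence "symm T" unfolding T_def by (simp add: symm_def transpose_scalar transpose_uminus)
  moreover have "psd (mat 1 + 0 - offdiag T)"
    using psd_identity_plus_small[OF \<open>symm (offdiag P)\<close> less_imp_le[OF lam(1)] lam(2)]
    unfolding oT by simp
  ultimately have "(lam, 0, T) \<in> C0 Sh" unfolding C0_iff N using lam(1) pd_D by simp
  moreover have "Jdual Sh \<delta> lam 0 T = lam * (delta_max Sh - \<delta>)"
    unfolding Jdual_eq N delta_max_def P_def[symmetric] PD
    using pd_det_pos[OF pd_D] pd_det_pos[OF Sh] by (simp add: det_mul ln_mult)
  ultimately show ?thesis using that lam(1) \<delta> by simp
qed

lemma primal_feasible_self: "pd Sh \<Longrightarrow> 0 \<le> \<delta> \<Longrightarrow> (Sh, Sh) \<in> primal_feasible Sh \<delta>"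
  by (simp add: primal_feasible_def KL_self pd_psd) (simp add: pd_def)

lemma primal_value_le_trace:
  assumes "(R, S) \<in> primal_feasible Sh \<delta>"
  shows "primal_value Sh \<delta> \<le> trace R"
proof -
  have "bdd_below ((\<lambda>(R, S). trace R) ` primal_feasible Sh \<delta>)"
    by (rule bdd_belowI[of _ 0]) (auto simp: primal_feasible_def intro: psd_trace_nonneg)
  thus ?thesis unfolding primal_value_def using assms by (force intro: cInf_lower)
qed

lemma Jdual_le_primal_value:
  assumes "(lam, G, T) \<in> C0 Sh" "primal_feasible Sh \<delta> \<noteq> {}"
  shows "Jdual Sh \<delta> lam G T \<le> primal_value Sh \<delta>"
  unfolding primal_value_def using assms weak_duality by (force intro: cINF_greatest)

theorem zero_duality_gap:
  fixes Sh :: "real^'n^'n"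
  assumes Sh: "pd Sh" and \<delta>: "0 < \<delta>" "\<delta> < delta_max Sh"
  shows "primal_value Sh \<delta> = dual_value Sh \<delta>"
proof -
  let ?p = "primal_value Sh \<delta>" and ?D = "(\<lambda>(lam, G, T). Jdual Sh \<delta> lam G T) ` C0 Sh"
  have "(Sh, Sh) \<in> primal_feasible Sh \<delta>" using primal_feasible_self[OF Sh] \<delta>(1) by simp
  hence feasible: "primal_feasible Sh \<delta> \<noteq> {}" by blast
  obtain lam0 G0 T0 where 0: "(lam0, G0, T0) \<in> C0 Sh" "0 < Jdual Sh \<delta> lam0 G0 T0"
    using dual_point_positive_value[OF Sh \<delta>(2)] by blast
  have "0 < ?p" using Jdual_le_primal_value[OF 0(1) feasible] 0(2) by linarith
  then obtain lam G T where "(lam, G, T) \<in> C0 Sh" "?p \<le> Jdual Sh \<delta> lam G T"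
    using dual_attains_primal_lower_bound[OF Sh \<delta>(1)] primal_value_le_trace by blast
  moreover have "bdd_above ?D"
    by (rule bdd_aboveI[of _ ?p]) (auto intro: Jdual_le_primal_value[OF _ feasible])
  ultimately have "?p \<le> dual_value Sh \<delta>"
    unfolding dual_value_def by (force intro: cSup_upper2)
  moreover have "dual_value Sh \<delta> \<le> ?p"
    unfolding dual_value_def using 0(1) Jdual_le_primal_value[OF _ feasible] by (force intro: cSup_least)
  ultimately show ?thesis by simp
qed

lemma factor_through_kernel_basis:
  fixes L R :: "real^'n^'n" and U :: "real^'r^'n"
  assumes LR: "L ** R = 0" and R: "symm R"
    and U: "transpose U ** U = mat 1" "range (\<lambda>y. U *v y) = {x. L *v x = 0}"
  shows "R = U ** (transpose U ** R ** U) ** transpose U"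
proof -
  have UUR: "U ** transpose U ** R = R"
    unfolding matrix_eq_iff_columns
  proof
    fix j
    have "L *v (R *v axis j 1) = 0" using LR by (simp add: matrix_vector_mul_assoc)
    then obtain y where y: "R *v axis j 1 = U *v y" using U(2) by (metis (mono_tags) mem_Collect_eq rangeE)
    have "(U ** transpose U ** R) *v axis j 1 = U *v ((transpose U ** U) *v y)"
      by (simp only: matrix_vector_mul_assoc[symmetric] y)
    thus "(U ** transpose U ** R) *v axis j 1 = R *v axis j 1" using U(1) y by simp
  qed
  moreover have "transpose (U ** transpose U ** R) = R ** U ** transpose U"
    using R by (simp only: matrix_transpose_mul transpose_transpose symm_def matrix_mul_assoc)
  ultimately have "R ** U ** transpose U = R" using R by (simp add: symm_def)
  hence "U ** (transpose U ** R ** U) ** transpose U = R" using UUR by (simp only: matrix_mul_assoc)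
  thus ?thesis ..
qed

lemma optimal_solution_properties:
  fixes Sh G T R S :: "real^'n^'n" and lam \<delta> :: real
  assumes C: "(lam, G, T) \<in> C0 Sh" and F: "(R, S) \<in> primal_feasible Sh \<delta>"
    and eq: "Jdual Sh \<delta> lam G T = trace R"
  defines "L \<equiv> mat 1 + G - offdiag T"
  shows "S = lam *\<^sub>R matrix_inv (lam *\<^sub>R matrix_inv Sh - G + offdiag T)"
    and "trace (L ** R) = 0" "trace (G ** (S - R)) = 0" "trace (T ** offdiag (S - R)) = 0"
    and "{x. L *v x = 0} = {0} \<Longrightarrow> R = 0 \<and> offdiag S = 0"
    and "transpose U ** U = mat 1 \<Longrightarrow> range (\<lambda>y. U *v y) = {x. L *v x = 0}
      \<Longrightarrow> \<exists>Q. symm Q \<and> R = U ** Q ** transpose U \<and> offdiag (U ** Q ** transpose U) = offdiag S"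
proof -
  note slack = closed_duality_gap[OF C F eq, folded L_def] and F' = primal_feasibleD[OF F]
  show "S = lam *\<^sub>R matrix_inv (lam *\<^sub>R matrix_inv Sh - G + offdiag T)"
    "trace (L ** R) = 0" "trace (G ** (S - R)) = 0" by (fact slack)+
  show "trace (T ** offdiag (S - R)) = 0" using F'(4) by (simp add: trace_def)
  have LR: "L ** R = 0" using C F' slack(1) unfolding C0_iff L_def by (blast intro: trace_psd_mult_eq_0)
  have offdiag_S: "offdiag S = offdiag R" using F'(4) by (simp add: offdiag_diff)
  show "R = 0 \<and> offdiag S = 0" if "{x. L *v x = 0} = {0}"
  proof -
    have "R = 0" using LR that by (auto simp: matrix_eq_iff_columns matrix_vector_mul_assoc[symmetric])
    thus ?thesis using offdiag_S by simp
  qed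
  assume U: "transpose U ** U = mat 1" "range (\<lambda>y. U *v y) = {x. L *v x = 0}"
  show "\<exists>Q. symm Q \<and> R = U ** Q ** transpose U \<and> offdiag (U ** Q ** transpose U) = offdiag S"
  proof (intro exI conjI)
    show "symm (transpose U ** R ** U)"
      using F'(1) by (simp only: symm_def matrix_transpose_mul transpose_transpose matrix_mul_assoc)
    show R: "R = U ** (transpose U ** R ** U) ** transpose U"
      by (rule factor_through_kernel_basis[OF LR F'(1) U])
    show "offdiag (U ** (transpose U ** R ** U) ** transpose U) = offdiag S"
      using offdiag_S by (simp flip: R)
  qed
qed

theorem mainTheorem10:
  fixes Sh :: "real^'n^'n" and \<delta> :: real
  assumes "pd Sh" and "0 < \<delta>" and "\<delta> < delta_max Sh"
  shows "primal_value Sh \<delta> = dual_value Sh \<delta>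
    \<and> (\<forall>lam G T R S.
          (lam, G, T) \<in> C0 Sh \<and> Jdual Sh \<delta> lam G T = dual_value Sh \<delta>
          \<and> (R, S) \<in> primal_feasible Sh \<delta> \<and> trace R = primal_value Sh \<delta>
        \<longrightarrow> (let L = mat 1 + G - offdiag T in
              S = lam *\<^sub>R matrix_inv (lam *\<^sub>R matrix_inv Sh - G + offdiag T)
            \<and> trace (L ** R) = 0
            \<and> trace (G ** (S - R)) = 0
            \<and> trace (T ** offdiag (S - R)) = 0
            \<and> ({x. L *v x = 0} = {0} \<longrightarrow> R = 0 \<and> offdiag S = 0)
            \<and> (\<forall>U :: real^'r^'n.
                 transpose U ** U = mat 1 \<and> range (\<lambda>y. U *v y) = {x. L *v x = 0}
                 \<longrightarrow> (\<exists>Q :: real^'r^'r. symm Q \<and> R = U ** Q ** transpose U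
                        \<and> offdiag (U ** Q ** transpose U) = offdiag S))))"
proof (intro conjI allI impI)
  show gap: "primal_value Sh \<delta> = dual_value Sh \<delta>" using zero_duality_gap assms .
  fix lam G T R S
  assume "(lam, G, T) \<in> C0 Sh \<and> Jdual Sh \<delta> lam G T = dual_value Sh \<delta>
    \<and> (R, S) \<in> primal_feasible Sh \<delta> \<and> trace R = primal_value Sh \<delta>"
  with gap have "(lam, G, T) \<in> C0 Sh" "(R, S) \<in> primal_feasible Sh \<delta>" "Jdual Sh \<delta> lam G T = trace R"
    by auto
  note optimal = optimal_solution_properties[OF this]
  show "let L = mat 1 + G - offdiag T in
      S = lam *\<^sub>R matrix_inv (lam *\<^sub>R matrix_inv Sh - G + offdiag T)
      \<and> trace (L ** R) = 0 \<and> trace (G ** (S - R)) = 0 \<and> trace (T ** offdiag (S - R)) = 0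
      \<and> ({x. L *v x = 0} = {0} \<longrightarrow> R = 0 \<and> offdiag S = 0)
      \<and> (\<forall>U :: real^'r^'n. transpose U ** U = mat 1 \<and> range (\<lambda>y. U *v y) = {x. L *v x = 0}
          \<longrightarrow> (\<exists>Q :: real^'r^'r. symm Q \<and> R = U ** Q ** transpose U
                 \<and> offdiag (U ** Q ** transpose U) = offdiag S))"
    unfolding Let_def using optimal by blast
qed

end
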